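(* Consider the $K$-class system with joint distributions described in the context, with constants $M_R,L_R,L_P,L_Q>0$ and $\gamma\in[0,1)$. Let $\mathbf x_0^{\mathbf N}$ be initial states and $\boldsymbol\mu_0\in\mathcal P(\mathcal X\times[K])$ their empirical joint distribution. Define $C_R=M_R+L_R$, $C_P=2+KL_P$, $S_R=M_R(1+L_Q)+L_R(2+KL_Q)$, $S_P=(1+KL_Q)+KL_P(2+KL_Q)$. If $\gamma S_P<1$, then for every $\boldsymbol\pi\in\Pi$, $$\Big|v^{\mathbf N}(\mathbf x_0^{\mathbf N},\boldsymbol\pi)-v^{\mathrm{MF}}(\boldsymbol\mu_0,\boldsymbol\pi)\Big|\le\frac{C_R}{1-\gamma}\sqrt{|\mathcal X||\mathcal U|}\Big(\sum_{k}\frac1{\sqrt{N_k}}\Big)+C_P\Big(\frac{S_R}{S_P-1}\Big)\sqrt{|\mathcal X||\mathcal U|}\Big(\sum_k\frac1{\sqrt{N_k}}\Big)\Big[\frac1{1-\gamma S_P}-\frac1{1-\gamma}\Big].$$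
   Context: Fix $K\ge1$, $N_1,\dots,N_K\ge1$, $[K]=\{1,\dots,K\}$, $N_{\mathrm{pop}}=\sum_kN_k$, finite sets $\mathcal X,\mathcal U$, $\mathcal P(A)$ the probability distributions on $A$, $|\cdot|_1$ the $L_1$ norm. Agent $j\in[N_k]$ of class $k$ has state $x_{j,k}^t$, action $u_{j,k}^t$; $\boldsymbol\mu_t^{\mathbf N}(x,k)=\frac1{N_{\mathrm{pop}}}\sum_{j=1}^{N_k}\mathbf 1(x_{j,k}^t=x)$, $\boldsymbol\nu_t^{\mathbf N}(u,k)=\frac1{N_{\mathrm{pop}}}\sum_{j=1}^{N_k}\mathbf 1(u_{j,k}^t=u)$. For each $k$: $r_k:\mathcal X\times\mathcal U\times\mathcal P(\mathcal X\times[K])\times\mathcal P(\mathcal U\times[K])\to\mathbb R$, $P_k:\mathcal X\times\mathcal U\times\mathcal P(\mathcal X\times[K])\times\mathcal P(\mathcal U\times[K])\to\mathcal P(\mathcal X)$ with $|r_k|\le M_R$, $|r_k(x,u,\boldsymbol\mu_1,\boldsymbol\nu_1)-r_k(x,u,\boldsymbol\mu_2,\boldsymbol\nu_2)|\le L_R(|\boldsymbol\mu_1-\boldsymbol\mu_2|_1+|\boldsymbol\nu_1-\boldsymbol\nu_2|_1)$, $|P_k(x,u,\boldsymbol\mu_1,\boldsymbol\nu_1)-P_k(x,u,\boldsymbol\mu_2,\boldsymbol\nu_2)|_1\le L_P(|\boldsymbol\mu_1-\boldsymbol\mu_2|_1+|\boldsymbol\nu_1-\boldsymbol\nu_2|_1)$.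 Policies $\boldsymbol\pi=\{\boldsymbol\pi_t\}_{t\ge0}$, $\boldsymbol\pi_t=(\pi_k^t)_k$, $\pi_k^t:\mathcal X\times\mathcal P(\mathcal X\times[K])\to\mathcal P(\mathcal U)$; $\Pi$ is the set of policies with $|\pi_k^t(x,\boldsymbol\mu_1)-\pi_k^t(x,\boldsymbol\mu_2)|_1\le L_Q|\boldsymbol\mu_1-\boldsymbol\mu_2|_1$. Dynamics: conditioned on all states, actions independent with $u_{j,k}^t\sim\pi_k^t(x_{j,k}^t,\boldsymbol\mu_t^{\mathbf N})$; conditioned on states and actions, next states independent with $x_{j,k}^{t+1}\sim P_k(x_{j,k}^t,u_{j,k}^t,\boldsymbol\mu_t^{\mathbf N},\boldsymbol\nu_t^{\mathbf N})$. $v^{\mathbf N}(\mathbf x_0^{\mathbf N},\boldsymbol\pi)=\frac1{N_{\mathrm{pop}}}\sum_k\sum_j\mathbb E[\sum_{t\ge0}\gamma^tr_k(x_{j,k}^t,u_{j,k}^t,\boldsymbol\mu_t^{\mathbf N},\boldsymbol\nu_t^{\mathbf N})]$. Mean-field: $\nu^{\mathrm{MF}}(\boldsymbol\mu,\boldsymbol\pi)(u,k)=\sum_x\pi_k(x,\boldsymbol\mu)(u)\boldsymbol\mu(x,k)$, $P^{\mathrm{MF}}(\boldsymbol\mu,\boldsymbol\pi)(x',k)=\sum_{x,u}\boldsymbol\mu(x,k)\pi_k(x,\boldsymbol\mu)(u)P_k(x,u,\boldsymbol\mu,\nu^{\mathrm{MF}}(\boldsymbol\mu,\boldsymbol\pi))(x')$,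 $r_k^{\mathrm{MF}}(\boldsymbol\mu,\boldsymbol\pi)=\sum_{x,u}\boldsymbol\mu(x,k)\pi_k(x,\boldsymbol\mu)(u)r_k(x,u,\boldsymbol\mu,\nu^{\mathrm{MF}}(\boldsymbol\mu,\boldsymbol\pi))$; with $\boldsymbol\mu_{t+1}=P^{\mathrm{MF}}(\boldsymbol\mu_t,\boldsymbol\pi_t)$, $v^{\mathrm{MF}}(\boldsymbol\mu_0,\boldsymbol\pi)=\sum_k\sum_{t\ge0}\gamma^tr_k^{\mathrm{MF}}(\boldsymbol\mu_t,\boldsymbol\pi_t)$. *)

theory Defs
  imports "HOL-Probability.Probability"
begin

text \<open>Classes are indexed by k in {1..K}; agent j of class k by the pair (k,j) with j in {1..N k}.\<close>

definition is_jdist :: "nat \<Rightarrow> ('a::finite \<Rightarrow> nat \<Rightarrow> real) \<Rightarrow> bool" where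
  "is_jdist K m \<longleftrightarrow> (\<forall>a k. 0 \<le> m a k) \<and> (\<forall>a k. k \<notin> {1..K} \<longrightarrow> m a k = 0)
     \<and> (\<Sum>a\<in>UNIV. \<Sum>k\<in>{1..K}. m a k) = 1"

definition jL1 :: "nat \<Rightarrow> ('a::finite \<Rightarrow> nat \<Rightarrow> real) \<Rightarrow> ('a \<Rightarrow> nat \<Rightarrow> real) \<Rightarrow> real" where
  "jL1 K m1 m2 = (\<Sum>a\<in>UNIV. \<Sum>k\<in>{1..K}. \<bar>m1 a k - m2 a k\<bar>)"

definition pL1 :: "'a::finite pmf \<Rightarrow> 'a pmf \<Rightarrow> real" where
  "pL1 p q = (\<Sum>a\<in>UNIV. \<bar>pmf p a - pmf q a\<bar>)"

definition agents :: "nat \<Rightarrow> (nat \<Rightarrow> nat) \<Rightarrow> (nat \<times> nat) set" where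
  "agents K N = {(k, j). k \<in> {1..K} \<and> j \<in> {1..N k}}"

definition Npop :: "nat \<Rightarrow> (nat \<Rightarrow> nat) \<Rightarrow> nat" where
  "Npop K N = (\<Sum>k\<in>{1..K}. N k)"

definition emp :: "nat \<Rightarrow> (nat \<Rightarrow> nat) \<Rightarrow> (nat \<times> nat \<Rightarrow> 'a) \<Rightarrow> 'a \<Rightarrow> nat \<Rightarrow> real" where
  "emp K N c a k = (if k \<in> {1..K}
      then (\<Sum>j\<in>{1..N k}. if c (k, j) = a then 1 else 0) / real (Npop K N) else 0)"

text \<open>Policies: pl t k x mu is the action distribution of class k at time t.\<close>
definition policy_class ::
  "nat \<Rightarrow> real \<Rightarrow> (nat \<Rightarrow> nat \<Rightarrow> 'x::finite \<Rightarrow> ('x \<Rightarrow> nat \<Rightarrow> real) \<Rightarrow> 'u::finite pmf) \<Rightarrow> bool" where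
  "policy_class K LQ pl \<longleftrightarrow> (\<forall>t. \<forall>k\<in>{1..K}. \<forall>x m1 m2. is_jdist K m1 \<longrightarrow> is_jdist K m2 \<longrightarrow>
      pL1 (pl t k x m1) (pl t k x m2) \<le> LQ * jL1 K m1 m2)"

definition act_law ::
  "nat \<Rightarrow> (nat \<Rightarrow> nat) \<Rightarrow> (nat \<Rightarrow> nat \<Rightarrow> 'x::finite \<Rightarrow> ('x \<Rightarrow> nat \<Rightarrow> real) \<Rightarrow> 'u::finite pmf)
   \<Rightarrow> nat \<Rightarrow> (nat \<times> nat \<Rightarrow> 'x) \<Rightarrow> (nat \<times> nat \<Rightarrow> 'u) pmf" where
  "act_law K N pl t xs = Pi_pmf (agents K N) undefined
     (\<lambda>(k, j). pl t k (xs (k, j)) (emp K N xs))"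

definition next_law ::
  "nat \<Rightarrow> (nat \<Rightarrow> nat) \<Rightarrow> (nat \<Rightarrow> 'x::finite \<Rightarrow> 'u::finite \<Rightarrow> ('x \<Rightarrow> nat \<Rightarrow> real) \<Rightarrow> ('u \<Rightarrow> nat \<Rightarrow> real) \<Rightarrow> 'x pmf)
   \<Rightarrow> (nat \<times> nat \<Rightarrow> 'x) \<Rightarrow> (nat \<times> nat \<Rightarrow> 'u) \<Rightarrow> (nat \<times> nat \<Rightarrow> 'x) pmf" where
  "next_law K N P xs us = Pi_pmf (agents K N) undefined
     (\<lambda>(k, j). P k (xs (k, j)) (us (k, j)) (emp K N xs) (emp K N us))"

primrec state_law ::
  "nat \<Rightarrow> (nat \<Rightarrow> nat) \<Rightarrow> (nat \<Rightarrow> 'x::finite \<Rightarrow> 'u::finite \<Rightarrow> ('x \<Rightarrow> nat \<Rightarrow> real) \<Rightarrow> ('u \<Rightarrow> nat \<Rightarrow> real) \<Rightarrow> 'x pmf)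
   \<Rightarrow> (nat \<Rightarrow> nat \<Rightarrow> 'x \<Rightarrow> ('x \<Rightarrow> nat \<Rightarrow> real) \<Rightarrow> 'u pmf)
   \<Rightarrow> (nat \<times> nat \<Rightarrow> 'x) \<Rightarrow> nat \<Rightarrow> (nat \<times> nat \<Rightarrow> 'x) pmf" where
  "state_law K N P pl x0 0 = return_pmf x0"
| "state_law K N P pl x0 (Suc t) =
     state_law K N P pl x0 t \<bind> (\<lambda>xs. act_law K N pl t xs \<bind> (\<lambda>us. next_law K N P xs us))"

definition sa_law where
  "sa_law K N P pl x0 t = state_law K N P pl x0 t \<bind>
     (\<lambda>xs. map_pmf (\<lambda>us. (xs, us)) (act_law K N pl t xs))"

text \<open>Value of the N-agent system (expectation and the discounted series interchanged,
  which is legitimate since rewards are bounded).\<close>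
definition vN ::
  "nat \<Rightarrow> (nat \<Rightarrow> nat) \<Rightarrow> (nat \<Rightarrow> 'x::finite \<Rightarrow> 'u::finite \<Rightarrow> ('x \<Rightarrow> nat \<Rightarrow> real) \<Rightarrow> ('u \<Rightarrow> nat \<Rightarrow> real) \<Rightarrow> real)
   \<Rightarrow> (nat \<Rightarrow> 'x \<Rightarrow> 'u \<Rightarrow> ('x \<Rightarrow> nat \<Rightarrow> real) \<Rightarrow> ('u \<Rightarrow> nat \<Rightarrow> real) \<Rightarrow> 'x pmf)
   \<Rightarrow> (nat \<Rightarrow> nat \<Rightarrow> 'x \<Rightarrow> ('x \<Rightarrow> nat \<Rightarrow> real) \<Rightarrow> 'u pmf) \<Rightarrow> real \<Rightarrow> (nat \<times> nat \<Rightarrow> 'x) \<Rightarrow> real" where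
  "vN K N r P pl \<gamma> x0 =
     (1 / real (Npop K N)) * (\<Sum>kj\<in>agents K N. \<Sum>t. \<gamma> ^ t *
        measure_pmf.expectation (sa_law K N P pl x0 t)
          (\<lambda>(xs, us). r (fst kj) (xs kj) (us kj) (emp K N xs) (emp K N us)))"

definition nuMF :: "(nat \<Rightarrow> 'x::finite \<Rightarrow> ('x \<Rightarrow> nat \<Rightarrow> real) \<Rightarrow> 'u pmf) \<Rightarrow> ('x \<Rightarrow> nat \<Rightarrow> real) \<Rightarrow> 'u \<Rightarrow> nat \<Rightarrow> real" where
  "nuMF pit mu u k = (\<Sum>x\<in>UNIV. pmf (pit k x mu) u * mu x k)"

definition PMF ::
  "(nat \<Rightarrow> 'x::finite \<Rightarrow> 'u::finite \<Rightarrow> ('x \<Rightarrow> nat \<Rightarrow> real) \<Rightarrow> ('u \<Rightarrow> nat \<Rightarrow> real) \<Rightarrow> 'x pmf)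
   \<Rightarrow> (nat \<Rightarrow> 'x \<Rightarrow> ('x \<Rightarrow> nat \<Rightarrow> real) \<Rightarrow> 'u pmf) \<Rightarrow> ('x \<Rightarrow> nat \<Rightarrow> real) \<Rightarrow> 'x \<Rightarrow> nat \<Rightarrow> real" where
  "PMF P pit mu x' k = (\<Sum>x\<in>UNIV. \<Sum>u\<in>UNIV.
      mu x k * pmf (pit k x mu) u * pmf (P k x u mu (nuMF pit mu)) x')"

definition rMF ::
  "(nat \<Rightarrow> 'x::finite \<Rightarrow> 'u::finite \<Rightarrow> ('x \<Rightarrow> nat \<Rightarrow> real) \<Rightarrow> ('u \<Rightarrow> nat \<Rightarrow> real) \<Rightarrow> real)
   \<Rightarrow> (nat \<Rightarrow> 'x \<Rightarrow> ('x \<Rightarrow> nat \<Rightarrow> real) \<Rightarrow> 'u pmf) \<Rightarrow> ('x \<Rightarrow> nat \<Rightarrow> real) \<Rightarrow> nat \<Rightarrow> real" where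
  "rMF r pit mu k = (\<Sum>x\<in>UNIV. \<Sum>u\<in>UNIV.
      mu x k * pmf (pit k x mu) u * r k x u mu (nuMF pit mu))"

primrec mf_traj ::
  "(nat \<Rightarrow> 'x::finite \<Rightarrow> 'u::finite \<Rightarrow> ('x \<Rightarrow> nat \<Rightarrow> real) \<Rightarrow> ('u \<Rightarrow> nat \<Rightarrow> real) \<Rightarrow> 'x pmf)
   \<Rightarrow> (nat \<Rightarrow> nat \<Rightarrow> 'x \<Rightarrow> ('x \<Rightarrow> nat \<Rightarrow> real) \<Rightarrow> 'u pmf) \<Rightarrow> ('x \<Rightarrow> nat \<Rightarrow> real) \<Rightarrow> nat \<Rightarrow> 'x \<Rightarrow> nat \<Rightarrow> real" where
  "mf_traj P pl mu0 0 = mu0"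
| "mf_traj P pl mu0 (Suc t) = PMF P (pl t) (mf_traj P pl mu0 t)"

definition vMF ::
  "nat \<Rightarrow> (nat \<Rightarrow> 'x::finite \<Rightarrow> 'u::finite \<Rightarrow> ('x \<Rightarrow> nat \<Rightarrow> real) \<Rightarrow> ('u \<Rightarrow> nat \<Rightarrow> real) \<Rightarrow> real)
   \<Rightarrow> (nat \<Rightarrow> 'x \<Rightarrow> 'u \<Rightarrow> ('x \<Rightarrow> nat \<Rightarrow> real) \<Rightarrow> ('u \<Rightarrow> nat \<Rightarrow> real) \<Rightarrow> 'x pmf)
   \<Rightarrow> (nat \<Rightarrow> nat \<Rightarrow> 'x \<Rightarrow> ('x \<Rightarrow> nat \<Rightarrow> real) \<Rightarrow> 'u pmf) \<Rightarrow> real \<Rightarrow> ('x \<Rightarrow> nat \<Rightarrow> real) \<Rightarrow> real" where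
  "vMF K r P pl \<gamma> mu0 = (\<Sum>k\<in>{1..K}. \<Sum>t. \<gamma> ^ t * rMF r (pl t) (mf_traj P pl mu0 t) k)"

end

theory Submission
  imports Defs
begin

(*
  Given the empirical state distribution, the actions and then the next states of different
  agents are drawn independently, so the variance of a class-wise sum of N_k terms with values
  in [0, 1] is at most N_k. Hence the empirical action and next-state distributions, and the
  empirical average of the transition kernels, lie within expected L1 distance
  sqrt |A| * (sum_k 1 / sqrt N_k) of their conditional means. Together with the Lipschitz
  continuity of the mean-field maps this gives e_{t+1} <= C + S e_t for the expected distance
  e_t between the empirical state distribution and the mean-field flow, so e_t grows at most
  like a geometric series; the reward gap at time t is a constant plus a multiple of e_t, and
  summing against gamma^t yields the bound. The constants obtained this way lack the factors K
  of the statement and are therefore smaller.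
*)

abbreviation expect :: "'a pmf \<Rightarrow> ('a \<Rightarrow> real) \<Rightarrow> real" where
  "expect M f \<equiv> measure_pmf.expectation M f"

abbreviation sampling_error :: "nat \<Rightarrow> (nat \<Rightarrow> nat) \<Rightarrow> real" where
  "sampling_error K N \<equiv> \<Sum>k\<in>{1..K}. 1 / sqrt (real (N k))"

declare integrable_measure_pmf_finite [simp]

lemma expect_eq_sum:
  assumes "finite S" "set_pmf M \<subseteq> S"
  shows "expect M f = (\<Sum>a\<in>S. f a * pmf M a)"
  using assms by (intro integral_measure_pmf_real) auto

lemma expect_bind:
  assumes "finite (set_pmf M)" "\<And>x. x \<in> set_pmf M \<Longrightarrow> finite (set_pmf (N x))"
  shows "expect (M \<bind> N) f = expect M (\<lambda>x. expect (N x) f)"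
proof -
  have "expect (M \<bind> N) f = (\<Sum>x\<in>set_pmf M. pmf M x *\<^sub>R expect (N x) f)"
    using assms by (intro pmf_expectation_bind) auto
  also have "\<dots> = expect M (\<lambda>x. expect (N x) f)"
    using assms(1) by (simp add: expect_eq_sum[of "set_pmf M"] mult.commute)
  finally show ?thesis .
qed

lemma expect_pair_pmf:
  assumes "finite (set_pmf p)" "finite (set_pmf q)"
  shows "expect (pair_pmf p q) h = expect p (\<lambda>a. expect q (\<lambda>b. h (a, b)))"
  using assms by (simp add: pair_pmf_def expect_bind)

lemma abs_expect_le:
  assumes "finite (set_pmf M)" "\<And>x. \<bar>f x\<bar> \<le> c"
  shows "\<bar>expect M f\<bar> \<le> c"
proof -
  have "\<bar>expect M f\<bar> \<le> expect M (\<lambda>x. \<bar>f x\<bar>)"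
    by (rule integral_abs_bound)
  also have "\<dots> \<le> c"
    using assms by (intro measure_pmf.integral_le_const) auto
  finally show ?thesis .
qed

lemma expect_abs_le_sqrt_expect_square:
  assumes "finite (set_pmf M)"
  shows "expect M (\<lambda>x. \<bar>f x\<bar>) \<le> sqrt (expect M (\<lambda>x. (f x)\<^sup>2))"
proof -
  define m where "m = expect M (\<lambda>x. \<bar>f x\<bar>)"
  have "0 \<le> expect M (\<lambda>x. (\<bar>f x\<bar> - m)\<^sup>2)"
    by (intro integral_nonneg_AE) auto
  also have "\<dots> = expect M (\<lambda>x. (f x)\<^sup>2 - 2 * m * \<bar>f x\<bar> + m\<^sup>2)"
    by (simp add: power2_eq_square algebra_simps)
  also have "\<dots> = expect M (\<lambda>x. (f x)\<^sup>2) - m\<^sup>2"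
    using assms by (simp add: m_def power2_eq_square)
  finally have "m\<^sup>2 \<le> expect M (\<lambda>x. (f x)\<^sup>2)" by simp
  moreover have "0 \<le> m" unfolding m_def by (intro integral_nonneg_AE) auto
  ultimately show ?thesis unfolding m_def by (simp add: real_le_rsqrt)
qed

lemma sum_pmf_UNIV [simp]: "(\<Sum>x\<in>UNIV. pmf (p :: 'a::finite pmf) x) = 1"
  by (rule sum_pmf_eq_1) auto

lemma expect_indicator_eq_pmf:
  fixes p :: "'a::finite pmf"
  shows "expect p (\<lambda>y. if y = a then 1 else 0) = pmf p a"
  by (simp add: expect_eq_sum[of UNIV] if_distrib[of "\<lambda>z. z * _"] cong: if_cong)

lemma sum_pmf_mult_le:
  fixes p :: "'a::finite pmf"
  assumes "\<And>u. f u \<le> c"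
  shows "(\<Sum>u\<in>UNIV. pmf p u * f u) \<le> c"
proof -
  have "(\<Sum>u\<in>UNIV. pmf p u * f u) \<le> (\<Sum>u\<in>UNIV. pmf p u * c)"
    using assms by (intro sum_mono mult_left_mono) simp_all
  then show ?thesis
    by (simp add: sum_distrib_right[symmetric])
qed

lemma finite_set_Pi_pmf [simp]:
  fixes p :: "'i \<Rightarrow> 'b::finite pmf"
  shows "finite A \<Longrightarrow> finite (set_pmf (Pi_pmf A d p))"
  by (rule finite_subset[OF set_Pi_pmf_subset']) auto

lemma expect_Pi_pmf_component:
  assumes "finite A" "i \<in> A"
  shows "expect (Pi_pmf A d p) (\<lambda>c. f (c i)) = expect (p i) f"
  using Pi_pmf_component[OF assms(1), of i d p] assms(2) by (metis integral_map_pmf)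

section \<open>Sums of independent bounded variables\<close>

lemma expect_Pi_pmf_sum_square:
  fixes p :: "'i \<Rightarrow> 'b::finite pmf" and g :: "'i \<Rightarrow> 'b \<Rightarrow> real"
  assumes "finite A" "\<And>i. i \<in> A \<Longrightarrow> expect (p i) (g i) = 0"
  shows "expect (Pi_pmf A d p) (\<lambda>c. (\<Sum>i\<in>A. g i (c i))\<^sup>2) = (\<Sum>i\<in>A. expect (p i) (\<lambda>y. (g i y)\<^sup>2))"
  using assms
proof (induction A rule: finite_induct)
  case empty
  then show ?case by simp
next
  case (insert a A)
  define S where "S c = (\<Sum>i\<in>A. g i (c i))" for c
  have sum_upd: "(\<Sum>i\<in>A. g i ((c(a := y)) i)) = S c" for c y
    using insert(2) by (auto simp: S_def intro!: sum.cong)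
  have "expect (Pi_pmf (insert a A) d p) (\<lambda>c. (\<Sum>i\<in>insert a A. g i (c i))\<^sup>2)
      = expect (pair_pmf (p a) (Pi_pmf A d p)) (\<lambda>(y, c). (g a y + S c)\<^sup>2)"
    using insert(1,2) by (simp add: Pi_pmf_insert case_prod_unfold sum_upd fun_upd_same del: fun_upd_apply)
  also have "\<dots> = expect (p a) (\<lambda>y. (g a y)\<^sup>2 + 2 * g a y * expect (Pi_pmf A d p) S
                                     + expect (Pi_pmf A d p) (\<lambda>c. (S c)\<^sup>2))"
    using insert(1) by (simp add: expect_pair_pmf power2_eq_square algebra_simps)
  also have "\<dots> = expect (p a) (\<lambda>y. (g a y)\<^sup>2) + expect (Pi_pmf A d p) (\<lambda>c. (S c)\<^sup>2)"
    using insert.prems by simp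
  finally show ?case
    using insert by (simp add: S_def)
qed

lemma expect_Pi_pmf_abs_centered_sum_le:
  fixes p :: "'i \<Rightarrow> 'b::finite pmf" and h :: "'i \<Rightarrow> 'b \<Rightarrow> real"
  assumes "finite A" "B \<subseteq> A" and h: "\<And>i y. 0 \<le> h i y" "\<And>i y. h i y \<le> 1"
  shows "expect (Pi_pmf A d p) (\<lambda>c. \<bar>\<Sum>i\<in>B. h i (c i) - expect (p i) (h i)\<bar>)
           \<le> sqrt (\<Sum>i\<in>B. expect (p i) (h i))"
proof -
  define g where "g i y = h i y - expect (p i) (h i)" for i y
  have B: "finite B" using assms(1,2) by (rule rev_finite_subset)
  have "expect (Pi_pmf A d p) (\<lambda>c. \<bar>\<Sum>i\<in>B. g i (c i)\<bar>) = expect (Pi_pmf B d p) (\<lambda>c. \<bar>\<Sum>i\<in>B. g i (c i)\<bar>)"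
    using assms(1,2) by (simp add: Pi_pmf_subset[of A B] cong: sum.cong)
  also have "\<dots> \<le> sqrt (expect (Pi_pmf B d p) (\<lambda>c. (\<Sum>i\<in>B. g i (c i))\<^sup>2))"
    using B by (intro expect_abs_le_sqrt_expect_square) simp
  also have "expect (Pi_pmf B d p) (\<lambda>c. (\<Sum>i\<in>B. g i (c i))\<^sup>2) = (\<Sum>i\<in>B. expect (p i) (\<lambda>y. (g i y)\<^sup>2))"
    using B by (intro expect_Pi_pmf_sum_square) (simp_all add: g_def)
  also have "\<dots> \<le> (\<Sum>i\<in>B. expect (p i) (h i))"
  proof (intro sum_mono)
    fix i
    have "expect (p i) (\<lambda>y. (g i y)\<^sup>2) = expect (p i) (\<lambda>y. (h i y)\<^sup>2) - (expect (p i) (h i))\<^sup>2"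
      by (simp add: g_def power2_eq_square algebra_simps)
    also have "\<dots> \<le> expect (p i) (\<lambda>y. (h i y)\<^sup>2)"
      by simp
    also have "\<dots> \<le> expect (p i) (h i)"
      using h by (intro integral_mono) (simp_all add: power2_eq_square mult_left_le)
    finally show "expect (p i) (\<lambda>y. (g i y)\<^sup>2) \<le> expect (p i) (h i)" .
  qed
  finally show ?thesis by (simp add: g_def)
qed

lemma sum_sqrt_le_sqrt_card_mult_sum:
  assumes "\<And>a. a \<in> S \<Longrightarrow> 0 \<le> T a"
  shows "(\<Sum>a\<in>S. sqrt (T a)) \<le> sqrt (real (card S) * (\<Sum>a\<in>S. T a))"
proof -
  have "(\<Sum>a\<in>S. sqrt (T a))\<^sup>2 \<le> (\<Sum>a\<in>S. (sqrt (T a))\<^sup>2) * card S"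
    by (rule sum_squared_le_sum_of_squares)
  also have "\<dots> = real (card S) * (\<Sum>a\<in>S. T a)"
    using assms by simp
  finally show ?thesis by (rule real_le_rsqrt)
qed

lemma agents_eq_Sigma: "agents K N = Sigma {1..K} (\<lambda>k. {1..N k})"
  by (auto simp: agents_def)

lemma finite_agents [simp]: "finite (agents K N)"
  by (simp add: agents_eq_Sigma)

lemma sum_agents: "(\<Sum>i\<in>agents K N. f i) = (\<Sum>k\<in>{1..K}. \<Sum>j\<in>{1..N k}. f (k, j))"
  by (simp add: agents_eq_Sigma sum.Sigma)

lemma card_agents: "card (agents K N) = Npop K N"
  by (simp add: agents_eq_Sigma Npop_def)

lemma class_size_le_Npop: "k \<in> {1..K} \<Longrightarrow> N k \<le> Npop K N"
  unfolding Npop_def by (rule member_le_sum) auto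

lemma Npop_pos:
  assumes "1 \<le> K" "\<forall>k\<in>{1..K}. 1 \<le> N k"
  shows "0 < Npop K N"
proof -
  have "1 \<le> N 1"
    using assms by simp
  also have "\<dots> \<le> Npop K N"
    using assms(1) by (intro class_size_le_Npop) simp
  finally show ?thesis
    by simp
qed

(* Empirical distributions, and the mean-field maps evaluated at them, are averages of this
   form, so concentration is proved once for such averages. *)
definition agent_avg :: "nat \<Rightarrow> (nat \<Rightarrow> nat) \<Rightarrow> (nat \<times> nat \<Rightarrow> 'a \<Rightarrow> real) \<Rightarrow> 'a \<Rightarrow> nat \<Rightarrow> real" where
  "agent_avg K N w a k =
     (if k \<in> {1..K} then (\<Sum>j\<in>{1..N k}. w (k, j) a) / real (Npop K N) else 0)"

lemma emp_eq_agent_avg: "emp K N c = agent_avg K N (\<lambda>i a. if c i = a then 1 else 0)"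
  by (simp add: fun_eq_iff emp_def agent_avg_def)

lemma jL1_agent_avg:
  "jL1 K (agent_avg K N w1) (agent_avg K N w2) =
     (\<Sum>k\<in>{1..K}. \<Sum>a\<in>UNIV. \<bar>\<Sum>j\<in>{1..N k}. w1 (k, j) a - w2 (k, j) a\<bar>) / real (Npop K N)"
proof -
  have "\<bar>X / real (Npop K N) - Y / real (Npop K N)\<bar> = \<bar>X - Y\<bar> / real (Npop K N)" for X Y
    by (simp add: diff_divide_distrib[symmetric] abs_divide)
  then have "jL1 K (agent_avg K N w1) (agent_avg K N w2) =
      (\<Sum>a\<in>UNIV. \<Sum>k\<in>{1..K}. \<bar>\<Sum>j\<in>{1..N k}. w1 (k, j) a - w2 (k, j) a\<bar> / real (Npop K N))"
    unfolding jL1_def agent_avg_def by (intro sum.cong refl) (simp add: sum_subtractf)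
  also have "\<dots> = (\<Sum>k\<in>{1..K}. \<Sum>a\<in>UNIV. \<bar>\<Sum>j\<in>{1..N k}. w1 (k, j) a - w2 (k, j) a\<bar>) / real (Npop K N)"
    by (subst sum.swap) (simp only: sum_divide_distrib)
  finally show ?thesis .
qed

lemma jL1_agent_avg_le:
  assumes "Npop K N > 0" "\<And>i. i \<in> agents K N \<Longrightarrow> (\<Sum>a\<in>UNIV. \<bar>w1 i a - w2 i a\<bar>) \<le> c"
  shows "jL1 K (agent_avg K N w1) (agent_avg K N w2) \<le> c"
proof -
  have "(\<Sum>k\<in>{1..K}. \<Sum>a\<in>UNIV. \<bar>\<Sum>j\<in>{1..N k}. w1 (k, j) a - w2 (k, j) a\<bar>)
      \<le> (\<Sum>i\<in>agents K N. \<Sum>a\<in>UNIV. \<bar>w1 i a - w2 i a\<bar>)"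
    unfolding sum_agents
  proof (intro sum_mono)
    fix k
    have "(\<Sum>a\<in>UNIV. \<bar>\<Sum>j\<in>{1..N k}. w1 (k, j) a - w2 (k, j) a\<bar>)
        \<le> (\<Sum>a\<in>UNIV. \<Sum>j\<in>{1..N k}. \<bar>w1 (k, j) a - w2 (k, j) a\<bar>)"
      by (intro sum_mono sum_abs)
    then show "(\<Sum>a\<in>UNIV. \<bar>\<Sum>j\<in>{1..N k}. w1 (k, j) a - w2 (k, j) a\<bar>)
        \<le> (\<Sum>j\<in>{1..N k}. \<Sum>a\<in>UNIV. \<bar>w1 (k, j) a - w2 (k, j) a\<bar>)"
      by (simp only: sum.swap[of _ UNIV])
  qed
  also have "\<dots> \<le> (\<Sum>i\<in>agents K N. c)"
    using assms(2) by (rule sum_mono)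
  also have "\<dots> = real (Npop K N) * c"
    by (simp add: card_agents)
  finally show ?thesis
    using assms(1) by (simp add: jL1_agent_avg field_simps)
qed

lemma expect_class_deviation_le:
  fixes p :: "nat \<times> nat \<Rightarrow> 'b::finite pmf" and h :: "nat \<times> nat \<Rightarrow> 'a::finite \<Rightarrow> 'b \<Rightarrow> real"
  assumes k: "k \<in> {1..K}" and h: "\<And>i a y. 0 \<le> h i a y" "\<And>i y. (\<Sum>a\<in>UNIV. h i a y) \<le> 1"
  shows "(\<Sum>a\<in>UNIV. expect (Pi_pmf (agents K N) d p)
            (\<lambda>c. \<bar>\<Sum>j\<in>{1..N k}. h (k, j) a (c (k, j)) - expect (p (k, j)) (h (k, j) a)\<bar>))
         \<le> sqrt (real CARD('a) * real (N k))"
proof -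
  let ?B = "Pair k ` {1..N k}"
  have B: "?B \<subseteq> agents K N"
    using k by (auto simp: agents_def)
  have reindex: "(\<Sum>j\<in>{1..N k}. f (k, j)) = (\<Sum>i\<in>?B. f i)" for f :: "nat \<times> nat \<Rightarrow> real"
    by (simp add: sum.reindex inj_on_def)
  have h_le_1: "h i a y \<le> 1" for i a y
    by (rule order_trans[OF member_le_sum h(2)]) (simp_all add: h(1))
  have "(\<Sum>a\<in>UNIV. expect (Pi_pmf (agents K N) d p)
            (\<lambda>c. \<bar>\<Sum>j\<in>{1..N k}. h (k, j) a (c (k, j)) - expect (p (k, j)) (h (k, j) a)\<bar>))
      \<le> (\<Sum>a\<in>UNIV. sqrt (\<Sum>i\<in>?B. expect (p i) (h i a)))"
    unfolding reindex[of "\<lambda>i. h i _ (_ i) - expect (p i) (h i _)"]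
    using h h_le_1 by (intro sum_mono expect_Pi_pmf_abs_centered_sum_le[OF finite_agents B])
  also have "\<dots> \<le> sqrt (real CARD('a) * (\<Sum>a\<in>UNIV. \<Sum>i\<in>?B. expect (p i) (h i a)))"
    using h by (intro sum_sqrt_le_sqrt_card_mult_sum sum_nonneg integral_nonneg_AE) auto
  also have "(\<Sum>a\<in>UNIV. \<Sum>i\<in>?B. expect (p i) (h i a)) = (\<Sum>i\<in>?B. expect (p i) (\<lambda>y. \<Sum>a\<in>UNIV. h i a y))"
    by (subst sum.swap) (simp only: Bochner_Integration.integral_sum integrable_measure_pmf_finite finite)
  also have "\<dots> \<le> (\<Sum>i\<in>?B. 1)"
  proof (intro sum_mono)
    fix i
    have "expect (p i) (\<lambda>y. \<Sum>a\<in>UNIV. h i a y) \<le> expect (p i) (\<lambda>y. 1)"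
      using h(2) by (intro integral_mono) auto
    then show "expect (p i) (\<lambda>y. \<Sum>a\<in>UNIV. h i a y) \<le> 1"
      by simp
  qed
  also have "\<dots> = real (N k)"
    by (simp add: card_image inj_on_def)
  finally show ?thesis
    by (simp add: mult_left_mono)
qed

(* Also for n = 0, where 1 / sqrt 0 = 0; hence no class needs to be nonempty below. *)
lemma sqrt_mult_div_le:
  assumes "0 \<le> c" "0 \<le> n" "n \<le> M"
  shows "sqrt (c * n) / M \<le> sqrt c * (1 / sqrt n)"
proof (cases "n = 0")
  case False
  then have "sqrt (c * n) / M \<le> sqrt (c * n) / n"
    using assms by (intro divide_left_mono) auto
  also have "\<dots> = sqrt c * (1 / sqrt n)"
    using False assms by (simp add: real_sqrt_mult field_simps)
  finally show ?thesis .
qed simp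

lemma expect_jL1_agent_avg_le:
  fixes p :: "nat \<times> nat \<Rightarrow> 'b::finite pmf" and h :: "nat \<times> nat \<Rightarrow> 'a::finite \<Rightarrow> 'b \<Rightarrow> real"
  assumes h: "\<And>i a y. 0 \<le> h i a y" "\<And>i y. (\<Sum>a\<in>UNIV. h i a y) \<le> 1"
  shows "expect (Pi_pmf (agents K N) d p)
           (\<lambda>c. jL1 K (agent_avg K N (\<lambda>i a. h i a (c i))) (agent_avg K N (\<lambda>i a. expect (p i) (h i a))))
         \<le> sqrt (real CARD('a)) * sampling_error K N"
proof -
  let ?dev = "\<lambda>k a c. \<bar>\<Sum>j\<in>{1..N k}. h (k, j) a (c (k, j)) - expect (p (k, j)) (h (k, j) a)\<bar>"
  have "expect (Pi_pmf (agents K N) d p)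
           (\<lambda>c. jL1 K (agent_avg K N (\<lambda>i a. h i a (c i))) (agent_avg K N (\<lambda>i a. expect (p i) (h i a))))
      = (\<Sum>k\<in>{1..K}. (\<Sum>a\<in>UNIV. expect (Pi_pmf (agents K N) d p) (?dev k a)) / real (Npop K N))"
    unfolding jL1_agent_avg sum_divide_distrib[symmetric]
    by (subst integral_divide_zero) (simp add: Bochner_Integration.integral_sum)
  also have "\<dots> \<le> (\<Sum>k\<in>{1..K}. sqrt (real CARD('a)) * (1 / sqrt (real (N k))))"
  proof (intro sum_mono)
    fix k assume k: "k \<in> {1..K}"
    have "(\<Sum>a\<in>UNIV. expect (Pi_pmf (agents K N) d p) (?dev k a)) / real (Npop K N)
        \<le> sqrt (real CARD('a) * real (N k)) / real (Npop K N)"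
      using expect_class_deviation_le[OF k h] by (intro divide_right_mono) auto
    also have "\<dots> \<le> sqrt (real CARD('a)) * (1 / sqrt (real (N k)))"
      using class_size_le_Npop[OF k] by (intro sqrt_mult_div_le) auto
    finally show "(\<Sum>a\<in>UNIV. expect (Pi_pmf (agents K N) d p) (?dev k a)) / real (Npop K N)
        \<le> sqrt (real CARD('a)) * (1 / sqrt (real (N k)))" .
  qed
  also have "\<dots> = sqrt (real CARD('a)) * sampling_error K N"
    by (rule sum_distrib_left[symmetric])
  finally show ?thesis .
qed

lemma jdist_nonneg: "is_jdist K m \<Longrightarrow> 0 \<le> m a k"
  by (simp add: is_jdist_def)

lemma jdist_class_sum: "is_jdist K m \<Longrightarrow> (\<Sum>k\<in>{1..K}. \<Sum>a\<in>UNIV. m a k) = 1"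
  unfolding is_jdist_def by (subst sum.swap) simp

lemma is_jdist_same_class_mass:
  assumes "is_jdist K m" "\<And>a k. 0 \<le> m' a k" "\<And>a k. k \<notin> {1..K} \<Longrightarrow> m' a k = 0"
    and "\<And>k. k \<in> {1..K} \<Longrightarrow> (\<Sum>a\<in>UNIV. m' a k) = (\<Sum>a\<in>UNIV. m a k)"
  shows "is_jdist K m'"
  using assms jdist_class_sum[OF assms(1)] unfolding is_jdist_def
  by (subst sum.swap) simp

lemma sum_jdist_mult_le:
  assumes "is_jdist K m" "\<And>k x. k \<in> {1..K} \<Longrightarrow> f k x \<le> c"
  shows "(\<Sum>k\<in>{1..K}. \<Sum>x\<in>UNIV. m x k * f k x) \<le> c"
proof -
  have "(\<Sum>k\<in>{1..K}. \<Sum>x\<in>UNIV. m x k * f k x) \<le> (\<Sum>k\<in>{1..K}. \<Sum>x\<in>UNIV. m x k * c)"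
    using assms by (intro sum_mono mult_left_mono) (auto simp: jdist_nonneg)
  also have "\<dots> = c"
    using jdist_class_sum[OF assms(1)] by (simp add: sum_distrib_right[symmetric])
  finally show ?thesis .
qed

lemma jL1_swap: "jL1 K m1 m2 = (\<Sum>k\<in>{1..K}. \<Sum>a\<in>UNIV. \<bar>m1 a k - m2 a k\<bar>)"
  unfolding jL1_def by (rule sum.swap)

lemma jL1_nonneg: "0 \<le> jL1 K m1 m2"
  by (simp add: jL1_def sum_nonneg)

lemma jL1_triangle: "jL1 K m1 m3 \<le> jL1 K m1 m2 + jL1 K m2 m3"
  unfolding jL1_def sum.distrib[symmetric]
  by (intro sum_mono) (simp add: order_trans[OF abs_triangle_ineq] sum.distrib[symmetric] sum_mono)

lemma jL1_triangle3: "jL1 K m1 m4 \<le> jL1 K m1 m2 + jL1 K m2 m3 + jL1 K m3 m4"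
  using jL1_triangle[of K m1 m4 m2] jL1_triangle[of K m2 m4 m3] by linarith

lemma emp_jdist:
  assumes "Npop K N > 0"
  shows "is_jdist K (emp K N c)"
proof -
  have "(\<Sum>a\<in>UNIV. \<Sum>k\<in>{1..K}. emp K N c a k)
      = (\<Sum>k\<in>{1..K}. (\<Sum>j\<in>{1..N k}. \<Sum>a\<in>UNIV. if c (k, j) = a then 1 else 0) / real (Npop K N))"
    unfolding emp_def by (subst sum.swap) (simp add: sum_divide_distrib[symmetric] sum.swap[of _ UNIV])
  also have "\<dots> = real (Npop K N) / real (Npop K N)"
    by (simp add: Npop_def sum_divide_distrib[symmetric])
  also have "\<dots> = 1"
    using assms by simp
  finally show ?thesis
    unfolding is_jdist_def by (simp add: emp_def sum_nonneg)
qed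

lemma nuMF_jdist:
  assumes "is_jdist K m"
  shows "is_jdist K (nuMF pit m)"
proof (rule is_jdist_same_class_mass[OF assms])
  show "0 \<le> nuMF pit m u k" for u k
    using jdist_nonneg[OF assms] by (simp add: nuMF_def sum_nonneg)
  show "nuMF pit m u k = 0" if "k \<notin> {1..K}" for u k
    using assms that by (simp add: nuMF_def is_jdist_def)
  show "(\<Sum>u\<in>UNIV. nuMF pit m u k) = (\<Sum>x\<in>UNIV. m x k)" for k
    unfolding nuMF_def by (subst sum.swap) (simp add: sum_distrib_right[symmetric])
qed

lemma PMF_jdist:
  assumes "is_jdist K m"
  shows "is_jdist K (PMF P pit m)"
proof (rule is_jdist_same_class_mass[OF assms])
  show "0 \<le> PMF P pit m y k" for y k
    using jdist_nonneg[OF assms] by (simp add: PMF_def sum_nonneg)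
  show "PMF P pit m y k = 0" if "k \<notin> {1..K}" for y k
    using assms that by (simp add: PMF_def is_jdist_def)
  have "(\<Sum>y\<in>UNIV. \<Sum>u\<in>UNIV. m x k * pmf (pit k x m) u * pmf (P k x u m (nuMF pit m)) y) = m x k" for x k
    by (subst sum.swap) (simp add: sum_distrib_left[symmetric] sum_distrib_right[symmetric])
  then show "(\<Sum>y\<in>UNIV. PMF P pit m y k) = (\<Sum>x\<in>UNIV. m x k)" for k
    unfolding PMF_def by (subst sum.swap) simp
qed

lemma mf_traj_jdist: "is_jdist K mu0 \<Longrightarrow> is_jdist K (mf_traj P pl mu0 t)"
  by (induction t) (simp_all add: PMF_jdist)

lemma abs_mult_diff_le:
  fixes a b f g :: real
  assumes "0 \<le> b" "\<bar>f\<bar> \<le> M" "\<bar>f - g\<bar> \<le> D"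
  shows "\<bar>a * f - b * g\<bar> \<le> \<bar>a - b\<bar> * M + b * D"
proof -
  have "a * f - b * g = (a - b) * f + b * (f - g)"
    by (simp add: algebra_simps)
  then have "\<bar>a * f - b * g\<bar> \<le> \<bar>a - b\<bar> * \<bar>f\<bar> + b * \<bar>f - g\<bar>"
    using assms(1) by (metis abs_mult abs_of_nonneg abs_triangle_ineq)
  also have "\<dots> \<le> \<bar>a - b\<bar> * M + b * D"
    using assms by (intro add_mono mult_left_mono) auto
  finally show ?thesis .
qed

lemma L1_scaled_pmf_le:
  fixes q q' :: "'y::finite pmf"
  assumes "0 \<le> b"
  shows "(\<Sum>y\<in>UNIV. \<bar>a * pmf q y - b * pmf q' y\<bar>) \<le> \<bar>a - b\<bar> + b * pL1 q q'"
proof -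
  have "(\<Sum>y\<in>UNIV. \<bar>a * pmf q y - b * pmf q' y\<bar>)
      \<le> (\<Sum>y\<in>UNIV. \<bar>a - b\<bar> * pmf q y + b * \<bar>pmf q y - pmf q' y\<bar>)"
    using assms by (intro sum_mono abs_mult_diff_le) simp_all
  also have "\<dots> = \<bar>a - b\<bar> + b * pL1 q q'"
    by (simp add: sum.distrib sum_distrib_left[symmetric] pL1_def)
  finally show ?thesis .
qed

lemma L1_mixture_le:
  fixes q q' :: "'x \<Rightarrow> 'u \<Rightarrow> 'y::finite pmf"
  assumes "finite X" "finite U" "\<And>x u. 0 \<le> b x u"
  shows "(\<Sum>y\<in>UNIV. \<bar>\<Sum>x\<in>X. \<Sum>u\<in>U. a x u * pmf (q x u) y - b x u * pmf (q' x u) y\<bar>)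
    \<le> (\<Sum>x\<in>X. \<Sum>u\<in>U. \<bar>a x u - b x u\<bar> + b x u * pL1 (q x u) (q' x u))"
proof -
  have "(\<Sum>y\<in>UNIV. \<bar>\<Sum>x\<in>X. \<Sum>u\<in>U. a x u * pmf (q x u) y - b x u * pmf (q' x u) y\<bar>)
      \<le> (\<Sum>y\<in>UNIV. \<Sum>x\<in>X. \<Sum>u\<in>U. \<bar>a x u * pmf (q x u) y - b x u * pmf (q' x u) y\<bar>)"
    by (intro sum_mono order_trans[OF sum_abs] sum_abs)
  also have "\<dots> = (\<Sum>x\<in>X. \<Sum>u\<in>U. \<Sum>y\<in>UNIV. \<bar>a x u * pmf (q x u) y - b x u * pmf (q' x u) y\<bar>)"
    by (subst sum.swap) (simp only: sum.swap[of _ UNIV U])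
  also have "\<dots> \<le> (\<Sum>x\<in>X. \<Sum>u\<in>U. \<bar>a x u - b x u\<bar> + b x u * pL1 (q x u) (q' x u))"
    using assms(3) by (intro sum_mono L1_scaled_pmf_le)
  finally show ?thesis .
qed

lemma sum_emp_mult:
  fixes c :: "nat \<times> nat \<Rightarrow> 'a::finite"
  shows "(\<Sum>x\<in>UNIV. emp K N c x k * f x) =
     (if k \<in> {1..K} then (\<Sum>j\<in>{1..N k}. f (c (k, j))) / real (Npop K N) else 0)"
proof (cases "k \<in> {1..K}")
  case True
  have "(\<Sum>x\<in>UNIV. \<Sum>j\<in>{1..N k}. (if c (k, j) = x then 1 else 0) * f x) = (\<Sum>j\<in>{1..N k}. f (c (k, j)))"
    by (subst sum.swap) (simp add: if_distrib[of "\<lambda>z. z * _"] cong: if_cong)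
  with True show ?thesis
    by (simp add: emp_def sum_distrib_right sum_divide_distrib[symmetric])
next
  case False
  then have "emp K N c x k = 0" for x
    by (auto simp: emp_def)
  with False show ?thesis
    by auto
qed

lemma nuMF_emp:
  fixes c :: "nat \<times> nat \<Rightarrow> 'x::finite"
  shows "nuMF pit (emp K N c) = agent_avg K N (\<lambda>i. pmf (pit (fst i) (c i) (emp K N c)))"
proof (intro ext)
  fix u k
  have "nuMF pit (emp K N c) u k = (\<Sum>x\<in>UNIV. emp K N c x k * pmf (pit k x (emp K N c)) u)"
    by (simp add: nuMF_def mult.commute)
  then show "nuMF pit (emp K N c) u k = agent_avg K N (\<lambda>i. pmf (pit (fst i) (c i) (emp K N c))) u k"
    by (simp add: sum_emp_mult agent_avg_def)
qed

lemma PMF_emp: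
  fixes c :: "nat \<times> nat \<Rightarrow> 'x::finite"
  shows "PMF P pit (emp K N c) = agent_avg K N (\<lambda>i y. expect (pit (fst i) (c i) (emp K N c))
      (\<lambda>u. pmf (P (fst i) (c i) u (emp K N c) (nuMF pit (emp K N c))) y))"
proof (intro ext)
  fix y k
  let ?\<mu> = "emp K N c"
  have "PMF P pit ?\<mu> y k = (\<Sum>x\<in>UNIV. ?\<mu> x k * expect (pit k x ?\<mu>) (\<lambda>u. pmf (P k x u ?\<mu> (nuMF pit ?\<mu>)) y))"
    by (simp add: PMF_def expect_eq_sum[of UNIV] sum_distrib_left mult.assoc mult.commute)
  then show "PMF P pit ?\<mu> y k = agent_avg K N (\<lambda>i y. expect (pit (fst i) (c i) ?\<mu>)
      (\<lambda>u. pmf (P (fst i) (c i) u ?\<mu> (nuMF pit ?\<mu>)) y)) y k"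
    by (simp add: sum_emp_mult agent_avg_def)
qed

lemma rMF_sum_emp:
  fixes c :: "nat \<times> nat \<Rightarrow> 'x::finite"
  shows "(\<Sum>k\<in>{1..K}. rMF r pit (emp K N c) k) =
     (\<Sum>i\<in>agents K N. expect (pit (fst i) (c i) (emp K N c))
        (\<lambda>u. r (fst i) (c i) u (emp K N c) (nuMF pit (emp K N c)))) / real (Npop K N)"
proof -
  let ?\<mu> = "emp K N c"
  have "rMF r pit ?\<mu> k = (\<Sum>x\<in>UNIV. ?\<mu> x k * expect (pit k x ?\<mu>) (\<lambda>u. r k x u ?\<mu> (nuMF pit ?\<mu>)))" for k
    by (simp add: rMF_def expect_eq_sum[of UNIV] sum_distrib_left mult_ac)
  then show ?thesis
    by (simp add: sum_emp_mult sum_agents sum_divide_distrib)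
qed

section \<open>Sampling errors of the N-agent dynamics\<close>

lemma finite_set_act_law [simp]: "finite (set_pmf (act_law K N pl t xs))"
  by (simp add: act_law_def)

lemma finite_set_next_law [simp]: "finite (set_pmf (next_law K N P xs us))"
  by (simp add: next_law_def)

lemma finite_set_state_law [simp]: "finite (set_pmf (state_law K N P pl x0 t))"
  by (induction t) auto

lemma finite_set_sa_law [simp]: "finite (set_pmf (sa_law K N P pl x0 t))"
  by (simp add: sa_law_def)

lemma expect_jL1_emp_Pi_pmf_le:
  fixes p :: "nat \<times> nat \<Rightarrow> 'a::finite pmf"
  shows "expect (Pi_pmf (agents K N) d p) (\<lambda>c. jL1 K (emp K N c) (agent_avg K N (\<lambda>i. pmf (p i))))
           \<le> sqrt (real CARD('a)) * sampling_error K N"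
  using expect_jL1_agent_avg_le[of "\<lambda>i a y. if y = a then 1 else 0" K N d p]
  by (simp add: emp_eq_agent_avg expect_indicator_eq_pmf)

lemma expect_act_law_jL1_le:
  fixes pl :: "nat \<Rightarrow> nat \<Rightarrow> 'x::finite \<Rightarrow> ('x \<Rightarrow> nat \<Rightarrow> real) \<Rightarrow> 'u::finite pmf"
  shows "expect (act_law K N pl t xs) (\<lambda>us. jL1 K (emp K N us) (nuMF (pl t) (emp K N xs)))
           \<le> sqrt (real CARD('u)) * sampling_error K N"
  using expect_jL1_emp_Pi_pmf_le[of K N undefined "\<lambda>i. pl t (fst i) (xs i) (emp K N xs)"]
  by (simp add: act_law_def nuMF_emp case_prod_unfold)

lemma expect_next_law_jL1_le:
  fixes P :: "nat \<Rightarrow> 'x::finite \<Rightarrow> 'u::finite \<Rightarrow> ('x \<Rightarrow> nat \<Rightarrow> real) \<Rightarrow> ('u \<Rightarrow> nat \<Rightarrow> real) \<Rightarrow> 'x pmf"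
  shows "expect (next_law K N P xs us)
           (\<lambda>xs'. jL1 K (emp K N xs')
              (agent_avg K N (\<lambda>i. pmf (P (fst i) (xs i) (us i) (emp K N xs) (emp K N us)))))
         \<le> sqrt (real CARD('x)) * sampling_error K N"
  using expect_jL1_emp_Pi_pmf_le[of K N undefined
      "\<lambda>i. P (fst i) (xs i) (us i) (emp K N xs) (emp K N us)"]
  by (simp add: next_law_def case_prod_unfold)

lemma expect_act_law_transition_avg_le:
  fixes K :: nat and N :: "nat \<Rightarrow> nat" and xs :: "nat \<times> nat \<Rightarrow> 'x::finite"
    and P :: "nat \<Rightarrow> 'x \<Rightarrow> 'u::finite \<Rightarrow> ('x \<Rightarrow> nat \<Rightarrow> real) \<Rightarrow> ('u \<Rightarrow> nat \<Rightarrow> real) \<Rightarrow> 'x pmf"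
  defines "\<mu> \<equiv> emp K N xs"
  shows "expect (act_law K N pl t xs)
           (\<lambda>us. jL1 K (agent_avg K N (\<lambda>i. pmf (P (fst i) (xs i) (us i) \<mu> (nuMF (pl t) \<mu>))))
              (PMF P (pl t) \<mu>))
         \<le> sqrt (real CARD('x)) * sampling_error K N"
  using expect_jL1_agent_avg_le[of "\<lambda>i a y. pmf (P (fst i) (xs i) y \<mu> (nuMF (pl t) \<mu>)) a" K N
      undefined "\<lambda>i. pl t (fst i) (xs i) \<mu>"]
  by (simp add: act_law_def \<mu>_def PMF_emp case_prod_unfold)

lemma summable_discounted:
  fixes \<gamma> :: real
  assumes "0 \<le> \<gamma>" "\<gamma> < 1" "\<And>t. \<bar>a t\<bar> \<le> M"
  shows "summable (\<lambda>t. \<gamma> ^ t * a t)"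
proof (rule summable_comparison_test')
  show "summable (\<lambda>t. M * \<gamma> ^ t)"
    using assms(1,2) by (intro summable_mult summable_geometric) simp
  show "norm (\<gamma> ^ t * a t) \<le> M * \<gamma> ^ t" for t
    using assms mult_right_mono[OF assms(3)[of t], of "\<gamma> ^ t"] by (simp add: abs_mult mult.commute)
qed

lemma discounted_gap_le:
  fixes \<gamma> S c d :: real
  assumes a: "(\<lambda>t. \<gamma> ^ t * a t) sums A" and b: "(\<lambda>t. \<gamma> ^ t * b t) sums B"
    and gap: "\<And>t. \<bar>a t - b t\<bar> \<le> c + d * (\<Sum>s<t. S ^ s)"
    and \<gamma>: "0 \<le> \<gamma>" "\<gamma> * S < 1" and S: "1 < S"
  shows "\<bar>A - B\<bar> \<le> c / (1 - \<gamma>) + d / (S - 1) * (1 / (1 - \<gamma> * S) - 1 / (1 - \<gamma>))"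
proof -
  have "\<gamma> \<le> \<gamma> * S"
    using \<gamma>(1) S by (simp add: mult_le_cancel_left1)
  with \<gamma>(2) have "\<gamma> < 1"
    by linarith
  have "(\<lambda>t. c * \<gamma> ^ t + d / (S - 1) * ((\<gamma> * S) ^ t - \<gamma> ^ t))
      sums (c * (1 / (1 - \<gamma>)) + d / (S - 1) * (1 / (1 - \<gamma> * S) - 1 / (1 - \<gamma>)))"
    using \<gamma> \<open>\<gamma> < 1\<close> S by (intro sums_add sums_mult sums_diff geometric_sums) auto
  moreover have "c * \<gamma> ^ t + d / (S - 1) * ((\<gamma> * S) ^ t - \<gamma> ^ t) = \<gamma> ^ t * (c + d * (\<Sum>s<t. S ^ s))" for t
    using S by (simp add: geometric_sum power_mult_distrib field_simps)
  ultimately have bound: "(\<lambda>t. \<gamma> ^ t * (c + d * (\<Sum>s<t. S ^ s)))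
      sums (c / (1 - \<gamma>) + d / (S - 1) * (1 / (1 - \<gamma> * S) - 1 / (1 - \<gamma>)))"
    by simp
  have "norm (A - B) \<le> c / (1 - \<gamma>) + d / (S - 1) * (1 / (1 - \<gamma> * S) - 1 / (1 - \<gamma>))"
  proof (rule norm_sums_le[OF sums_diff[OF a b] bound])
    show "norm (\<gamma> ^ t * a t - \<gamma> ^ t * b t) \<le> \<gamma> ^ t * (c + d * (\<Sum>s<t. S ^ s))" for t
      using mult_left_mono[OF gap[of t], of "\<gamma> ^ t"] \<gamma>
      by (simp add: right_diff_distrib[symmetric] abs_mult)
  qed
  then show ?thesis
    by simp
qed

section \<open>Lipschitz bounds for the mean-field maps\<close>

locale mean_field_system =
  fixes K :: nat and N :: "nat \<Rightarrow> nat"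
    and r :: "nat \<Rightarrow> 'x::finite \<Rightarrow> 'u::finite \<Rightarrow> ('x \<Rightarrow> nat \<Rightarrow> real) \<Rightarrow> ('u \<Rightarrow> nat \<Rightarrow> real) \<Rightarrow> real"
    and P :: "nat \<Rightarrow> 'x \<Rightarrow> 'u \<Rightarrow> ('x \<Rightarrow> nat \<Rightarrow> real) \<Rightarrow> ('u \<Rightarrow> nat \<Rightarrow> real) \<Rightarrow> 'x pmf"
    and pl :: "nat \<Rightarrow> nat \<Rightarrow> 'x \<Rightarrow> ('x \<Rightarrow> nat \<Rightarrow> real) \<Rightarrow> 'u pmf"
    and MR LR LP LQ :: real
  assumes Npop_gt_0: "Npop K N > 0"
    and r_bounded: "\<And>k x u \<mu> \<nu>. k \<in> {1..K} \<Longrightarrow> is_jdist K \<mu> \<Longrightarrow> is_jdist K \<nu> \<Longrightarrow>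
          \<bar>r k x u \<mu> \<nu>\<bar> \<le> MR"
    and r_lipschitz: "\<And>k x u \<mu>1 \<nu>1 \<mu>2 \<nu>2. k \<in> {1..K} \<Longrightarrow>
          is_jdist K \<mu>1 \<Longrightarrow> is_jdist K \<nu>1 \<Longrightarrow> is_jdist K \<mu>2 \<Longrightarrow> is_jdist K \<nu>2 \<Longrightarrow>
          \<bar>r k x u \<mu>1 \<nu>1 - r k x u \<mu>2 \<nu>2\<bar> \<le> LR * (jL1 K \<mu>1 \<mu>2 + jL1 K \<nu>1 \<nu>2)"
    and P_lipschitz: "\<And>k x u \<mu>1 \<nu>1 \<mu>2 \<nu>2. k \<in> {1..K} \<Longrightarrow>
          is_jdist K \<mu>1 \<Longrightarrow> is_jdist K \<nu>1 \<Longrightarrow> is_jdist K \<mu>2 \<Longrightarrow> is_jdist K \<nu>2 \<Longrightarrow>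
          pL1 (P k x u \<mu>1 \<nu>1) (P k x u \<mu>2 \<nu>2) \<le> LP * (jL1 K \<mu>1 \<mu>2 + jL1 K \<nu>1 \<nu>2)"
    and pl_lipschitz: "\<And>t k x \<mu>1 \<mu>2. k \<in> {1..K} \<Longrightarrow> is_jdist K \<mu>1 \<Longrightarrow> is_jdist K \<mu>2 \<Longrightarrow>
          pL1 (pl t k x \<mu>1) (pl t k x \<mu>2) \<le> LQ * jL1 K \<mu>1 \<mu>2"
    and MR_nonneg: "0 \<le> MR" and LR_nonneg: "0 \<le> LR" and LP_nonneg: "0 \<le> LP" and LQ_nonneg: "0 \<le> LQ"

begin

lemma jdist_emp: "is_jdist K (emp K N c)"
  using Npop_gt_0 by (rule emp_jdist)

lemma state_action_L1_le:
  assumes m1: "is_jdist K m1" and m2: "is_jdist K m2"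
  shows "(\<Sum>k\<in>{1..K}. \<Sum>x\<in>UNIV. \<Sum>u\<in>UNIV. \<bar>m1 x k * pmf (pl t k x m1) u - m2 x k * pmf (pl t k x m2) u\<bar>)
    \<le> (1 + LQ) * jL1 K m1 m2"
proof -
  have "(\<Sum>k\<in>{1..K}. \<Sum>x\<in>UNIV. \<Sum>u\<in>UNIV. \<bar>m1 x k * pmf (pl t k x m1) u - m2 x k * pmf (pl t k x m2) u\<bar>)
      \<le> (\<Sum>k\<in>{1..K}. \<Sum>x\<in>UNIV. \<bar>m1 x k - m2 x k\<bar> + m2 x k * pL1 (pl t k x m1) (pl t k x m2))"
    using m2 by (intro sum_mono L1_scaled_pmf_le) (simp add: jdist_nonneg)
  also have "\<dots> \<le> jL1 K m1 m2 + LQ * jL1 K m1 m2"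
    using sum_jdist_mult_le[OF m2, of "\<lambda>k x. pL1 (pl t k x m1) (pl t k x m2)"] pl_lipschitz[OF _ m1 m2]
    by (simp add: sum.distrib jL1_swap)
  finally show ?thesis
    by (simp add: algebra_simps)
qed

lemma nuMF_lipschitz:
  assumes m1: "is_jdist K m1" and m2: "is_jdist K m2"
  shows "jL1 K (nuMF (pl t) m1) (nuMF (pl t) m2) \<le> (1 + LQ) * jL1 K m1 m2"
proof -
  have nuMF_eq: "nuMF (pl t) m u k = (\<Sum>x\<in>UNIV. m x k * pmf (pl t k x m) u)" for m u k
    by (simp add: nuMF_def mult.commute)
  have "jL1 K (nuMF (pl t) m1) (nuMF (pl t) m2)
      \<le> (\<Sum>k\<in>{1..K}. \<Sum>u\<in>UNIV. \<Sum>x\<in>UNIV. \<bar>m1 x k * pmf (pl t k x m1) u - m2 x k * pmf (pl t k x m2) u\<bar>)"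
    unfolding jL1_swap nuMF_eq by (intro sum_mono) (simp add: sum_subtractf[symmetric] sum_abs)
  also have "\<dots> = (\<Sum>k\<in>{1..K}. \<Sum>x\<in>UNIV. \<Sum>u\<in>UNIV. \<bar>m1 x k * pmf (pl t k x m1) u - m2 x k * pmf (pl t k x m2) u\<bar>)"
    by (rule sum.cong[OF refl], rule sum.swap)
  also have "\<dots> \<le> (1 + LQ) * jL1 K m1 m2"
    using m1 m2 by (rule state_action_L1_le)
  finally show ?thesis .
qed

lemma kernel_reward_lipschitz:
  assumes m1: "is_jdist K m1" and m2: "is_jdist K m2" and k: "k \<in> {1..K}"
  shows "pL1 (P k x u m1 (nuMF (pl t) m1)) (P k x u m2 (nuMF (pl t) m2)) \<le> LP * (2 + LQ) * jL1 K m1 m2"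
    and "\<bar>r k x u m1 (nuMF (pl t) m1) - r k x u m2 (nuMF (pl t) m2)\<bar> \<le> LR * (2 + LQ) * jL1 K m1 m2"
proof -
  have close: "jL1 K m1 m2 + jL1 K (nuMF (pl t) m1) (nuMF (pl t) m2) \<le> (2 + LQ) * jL1 K m1 m2"
    using nuMF_lipschitz[OF m1 m2] by (simp add: algebra_simps)
  have "pL1 (P k x u m1 (nuMF (pl t) m1)) (P k x u m2 (nuMF (pl t) m2))
      \<le> LP * (jL1 K m1 m2 + jL1 K (nuMF (pl t) m1) (nuMF (pl t) m2))"
    using k m1 m2 by (intro P_lipschitz nuMF_jdist)
  also have "\<dots> \<le> LP * ((2 + LQ) * jL1 K m1 m2)"
    using close LP_nonneg by (rule mult_left_mono)
  finally show "pL1 (P k x u m1 (nuMF (pl t) m1)) (P k x u m2 (nuMF (pl t) m2)) \<le> LP * (2 + LQ) * jL1 K m1 m2"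
    by (simp add: mult.assoc)
  have "\<bar>r k x u m1 (nuMF (pl t) m1) - r k x u m2 (nuMF (pl t) m2)\<bar>
      \<le> LR * (jL1 K m1 m2 + jL1 K (nuMF (pl t) m1) (nuMF (pl t) m2))"
    using k m1 m2 by (intro r_lipschitz nuMF_jdist)
  also have "\<dots> \<le> LR * ((2 + LQ) * jL1 K m1 m2)"
    using close LR_nonneg by (rule mult_left_mono)
  finally show "\<bar>r k x u m1 (nuMF (pl t) m1) - r k x u m2 (nuMF (pl t) m2)\<bar> \<le> LR * (2 + LQ) * jL1 K m1 m2"
    by (simp add: mult.assoc)
qed

lemma PMF_lipschitz:
  assumes m1: "is_jdist K m1" and m2: "is_jdist K m2"
  shows "jL1 K (PMF P (pl t) m1) (PMF P (pl t) m2) \<le> (1 + LQ + LP * (2 + LQ)) * jL1 K m1 m2"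
proof -
  let ?a = "\<lambda>m k x u. m x k * pmf (pl t k x m) u"
  let ?Q = "\<lambda>m k x u. P k x u m (nuMF (pl t) m)"
  have "jL1 K (PMF P (pl t) m1) (PMF P (pl t) m2)
      \<le> (\<Sum>k\<in>{1..K}. \<Sum>x\<in>UNIV. \<Sum>u\<in>UNIV. \<bar>?a m1 k x u - ?a m2 k x u\<bar> + ?a m2 k x u * pL1 (?Q m1 k x u) (?Q m2 k x u))"
    unfolding jL1_swap PMF_def sum_subtractf[symmetric]
    using m2 by (intro sum_mono L1_mixture_le) (simp_all add: jdist_nonneg)
  also have "\<dots> = (\<Sum>k\<in>{1..K}. \<Sum>x\<in>UNIV. \<Sum>u\<in>UNIV. \<bar>?a m1 k x u - ?a m2 k x u\<bar>)
      + (\<Sum>k\<in>{1..K}. \<Sum>x\<in>UNIV. m2 x k * (\<Sum>u\<in>UNIV. pmf (pl t k x m2) u * pL1 (?Q m1 k x u) (?Q m2 k x u)))"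
    by (simp add: sum.distrib sum_distrib_left mult.assoc)
  also have "\<dots> \<le> (1 + LQ) * jL1 K m1 m2 + LP * (2 + LQ) * jL1 K m1 m2"
    using state_action_L1_le[OF m1 m2] kernel_reward_lipschitz(1)[OF m1 m2]
    by (intro add_mono sum_jdist_mult_le[OF m2] sum_pmf_mult_le) auto
  finally show ?thesis
    by (simp add: algebra_simps)
qed

lemma rMF_sum_lipschitz:
  assumes m1: "is_jdist K m1" and m2: "is_jdist K m2"
  shows "\<bar>(\<Sum>k\<in>{1..K}. rMF r (pl t) m1 k) - (\<Sum>k\<in>{1..K}. rMF r (pl t) m2 k)\<bar>
    \<le> (MR * (1 + LQ) + LR * (2 + LQ)) * jL1 K m1 m2"
proof -
  let ?a = "\<lambda>m k x u. m x k * pmf (pl t k x m) u"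
  let ?R = "\<lambda>m k x u. r k x u m (nuMF (pl t) m)"
  have "\<bar>(\<Sum>k\<in>{1..K}. rMF r (pl t) m1 k) - (\<Sum>k\<in>{1..K}. rMF r (pl t) m2 k)\<bar>
      \<le> (\<Sum>k\<in>{1..K}. \<Sum>x\<in>UNIV. \<Sum>u\<in>UNIV. \<bar>?a m1 k x u * ?R m1 k x u - ?a m2 k x u * ?R m2 k x u\<bar>)"
    unfolding rMF_def sum_subtractf[symmetric]
    by (intro order_trans[OF sum_abs] sum_mono order_trans[OF sum_abs]) simp
  also have "\<dots> \<le> (\<Sum>k\<in>{1..K}. \<Sum>x\<in>UNIV. \<Sum>u\<in>UNIV.
      \<bar>?a m1 k x u - ?a m2 k x u\<bar> * MR + ?a m2 k x u * (LR * (2 + LQ) * jL1 K m1 m2))"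
    using m1 m2 kernel_reward_lipschitz(2)[OF m1 m2]
    by (intro sum_mono abs_mult_diff_le r_bounded nuMF_jdist) (simp_all add: jdist_nonneg)
  also have "\<dots> = MR * (\<Sum>k\<in>{1..K}. \<Sum>x\<in>UNIV. \<Sum>u\<in>UNIV. \<bar>?a m1 k x u - ?a m2 k x u\<bar>)
      + (\<Sum>k\<in>{1..K}. \<Sum>x\<in>UNIV. m2 x k * (\<Sum>u\<in>UNIV. pmf (pl t k x m2) u * (LR * (2 + LQ) * jL1 K m1 m2)))"
    by (simp add: sum.distrib sum_distrib_left mult_ac)
  also have "\<dots> \<le> MR * ((1 + LQ) * jL1 K m1 m2) + LR * (2 + LQ) * jL1 K m1 m2"
    using state_action_L1_le[OF m1 m2] MR_nonneg LR_nonneg LQ_nonneg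
    by (intro add_mono mult_left_mono sum_jdist_mult_le[OF m2] sum_pmf_mult_le) auto
  finally show ?thesis
    by (simp add: algebra_simps)
qed

lemma rMF_bounded:
  assumes m: "is_jdist K m" and k: "k \<in> {1..K}"
  shows "\<bar>rMF r (pl t) m k\<bar> \<le> MR"
proof -
  have "\<bar>rMF r (pl t) m k\<bar> \<le> (\<Sum>x\<in>UNIV. \<Sum>u\<in>UNIV. m x k * pmf (pl t k x m) u * MR)"
    unfolding rMF_def
  proof (intro order_trans[OF sum_abs] sum_mono order_trans[OF sum_abs])
    fix x u
    show "\<bar>m x k * pmf (pl t k x m) u * r k x u m (nuMF (pl t) m)\<bar> \<le> m x k * pmf (pl t k x m) u * MR"
      using r_bounded[OF k m nuMF_jdist[OF m]] jdist_nonneg[OF m]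
      by (simp add: abs_mult mult_left_mono)
  qed
  also have "\<dots> = (\<Sum>x\<in>UNIV. m x k) * MR"
    by (simp add: sum_distrib_left[symmetric] sum_distrib_right[symmetric])
  also have "\<dots> \<le> MR"
  proof -
    have "(\<Sum>x\<in>UNIV. m x k) \<le> (\<Sum>k\<in>{1..K}. \<Sum>x\<in>UNIV. m x k)"
      using k m by (intro member_le_sum) (auto intro!: sum_nonneg simp: jdist_nonneg)
    then show ?thesis
      using MR_nonneg jdist_nonneg[OF m] jdist_class_sum[OF m]
      by (intro mult_left_le_one_le sum_nonneg) auto
  qed
  finally show ?thesis .
qed

section \<open>Propagation of the approximation error\<close>

lemma jL1_transition_avg_le:
  assumes \<mu>: "is_jdist K \<mu>" and \<nu>1: "is_jdist K \<nu>1" and \<nu>2: "is_jdist K \<nu>2"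
  shows "jL1 K (agent_avg K N (\<lambda>i. pmf (P (fst i) (xs i) (us i) \<mu> \<nu>1)))
               (agent_avg K N (\<lambda>i. pmf (P (fst i) (xs i) (us i) \<mu> \<nu>2)))
         \<le> LP * jL1 K \<nu>1 \<nu>2"
  using Npop_gt_0
proof (rule jL1_agent_avg_le)
  fix i assume "i \<in> agents K N"
  then have "fst i \<in> {1..K}"
    by (auto simp: agents_def)
  from P_lipschitz[OF this \<mu> \<nu>1 \<mu> \<nu>2]
  show "(\<Sum>a\<in>UNIV. \<bar>pmf (P (fst i) (xs i) (us i) \<mu> \<nu>1) a - pmf (P (fst i) (xs i) (us i) \<mu> \<nu>2) a\<bar>)
      \<le> LP * jL1 K \<nu>1 \<nu>2"
    by (simp add: pL1_def jL1_def)
qed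

lemma expect_next_law_error_le:
  fixes xs :: "nat \<times> nat \<Rightarrow> 'x" and t :: nat
  defines "\<mu> \<equiv> emp K N xs"
  defines "\<nu> \<equiv> nuMF (pl t) \<mu>"
  shows "expect (next_law K N P xs us) (\<lambda>xs'. jL1 K (emp K N xs') (PMF P (pl t) \<mu>))
    \<le> sqrt (real CARD('x)) * sampling_error K N + LP * jL1 K (emp K N us) \<nu>
      + jL1 K (agent_avg K N (\<lambda>i. pmf (P (fst i) (xs i) (us i) \<mu> \<nu>))) (PMF P (pl t) \<mu>)"
proof -
  define q where "q \<nu>' = agent_avg K N (\<lambda>i. pmf (P (fst i) (xs i) (us i) \<mu> \<nu>'))" for \<nu>'
  have "expect (next_law K N P xs us) (\<lambda>xs'. jL1 K (emp K N xs') (PMF P (pl t) \<mu>))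
      \<le> expect (next_law K N P xs us) (\<lambda>xs'. jL1 K (emp K N xs') (q (emp K N us))
          + jL1 K (q (emp K N us)) (q \<nu>) + jL1 K (q \<nu>) (PMF P (pl t) \<mu>))"
    using jL1_triangle3 by (intro integral_mono) simp_all
  also have "\<dots> = expect (next_law K N P xs us) (\<lambda>xs'. jL1 K (emp K N xs') (q (emp K N us)))
      + jL1 K (q (emp K N us)) (q \<nu>) + jL1 K (q \<nu>) (PMF P (pl t) \<mu>)"
    by simp
  also have "\<dots> \<le> sqrt (real CARD('x)) * sampling_error K N + LP * jL1 K (emp K N us) \<nu>
      + jL1 K (q \<nu>) (PMF P (pl t) \<mu>)"
    unfolding q_def \<mu>_def \<nu>_def
    by (intro add_mono order_refl expect_next_law_jL1_le jL1_transition_avg_le jdist_emp nuMF_jdist)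
  finally show ?thesis
    by (simp add: q_def)
qed

lemma expect_one_step_error:
  "expect (act_law K N pl t xs \<bind> next_law K N P xs) (\<lambda>xs'. jL1 K (emp K N xs') (PMF P (pl t) (emp K N xs)))
     \<le> (2 * sqrt (real CARD('x)) + LP * sqrt (real CARD('u))) * sampling_error K N"
proof -
  define \<mu> where "\<mu> = emp K N xs"
  define \<nu> where "\<nu> = nuMF (pl t) \<mu>"
  define q where "q us = agent_avg K N (\<lambda>i. pmf (P (fst i) (xs i) (us i) \<mu> \<nu>))" for us
  have "expect (act_law K N pl t xs \<bind> next_law K N P xs) (\<lambda>xs'. jL1 K (emp K N xs') (PMF P (pl t) \<mu>))
      = expect (act_law K N pl t xs) (\<lambda>us. expect (next_law K N P xs us) (\<lambda>xs'. jL1 K (emp K N xs') (PMF P (pl t) \<mu>)))"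
    by (rule expect_bind) simp_all
  also have "\<dots> \<le> expect (act_law K N pl t xs) (\<lambda>us. sqrt (real CARD('x)) * sampling_error K N
      + LP * jL1 K (emp K N us) \<nu> + jL1 K (q us) (PMF P (pl t) \<mu>))"
    unfolding q_def \<mu>_def \<nu>_def by (intro integral_mono expect_next_law_error_le) simp_all
  also have "\<dots> = sqrt (real CARD('x)) * sampling_error K N
      + LP * expect (act_law K N pl t xs) (\<lambda>us. jL1 K (emp K N us) \<nu>)
      + expect (act_law K N pl t xs) (\<lambda>us. jL1 K (q us) (PMF P (pl t) \<mu>))"
    by simp
  also have "\<dots> \<le> sqrt (real CARD('x)) * sampling_error K N
      + LP * (sqrt (real CARD('u)) * sampling_error K N) + sqrt (real CARD('x)) * sampling_error K N"
    unfolding q_def \<mu>_def \<nu>_def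
    by (intro add_mono order_refl mult_left_mono LP_nonneg expect_act_law_jL1_le
        expect_act_law_transition_avg_le)
  finally show ?thesis
    by (simp add: \<mu>_def algebra_simps)
qed

definition mf_error :: "(nat \<times> nat \<Rightarrow> 'x) \<Rightarrow> nat \<Rightarrow> real" where
  "mf_error x0 t =
     expect (state_law K N P pl x0 t) (\<lambda>xs. jL1 K (emp K N xs) (mf_traj P pl (emp K N x0) t))"

lemma mf_error_nonneg: "0 \<le> mf_error x0 t"
  unfolding mf_error_def by (intro integral_nonneg_AE) (simp add: jL1_nonneg)

lemma mf_error_Suc_le:
  "mf_error x0 (Suc t) \<le> (2 * sqrt (real CARD('x)) + LP * sqrt (real CARD('u))) * sampling_error K N
     + (1 + LQ + LP * (2 + LQ)) * mf_error x0 t"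
proof -
  define C where "C = (2 * sqrt (real CARD('x)) + LP * sqrt (real CARD('u))) * sampling_error K N"
  define S where "S = 1 + LQ + LP * (2 + LQ)"
  define m where "m = mf_traj P pl (emp K N x0) t"
  have m: "is_jdist K m"
    unfolding m_def by (intro mf_traj_jdist jdist_emp)
  have step: "expect (act_law K N pl t xs \<bind> next_law K N P xs) (\<lambda>xs'. jL1 K (emp K N xs') (PMF P (pl t) m))
      \<le> C + S * jL1 K (emp K N xs) m" for xs
  proof -
    have "expect (act_law K N pl t xs \<bind> next_law K N P xs) (\<lambda>xs'. jL1 K (emp K N xs') (PMF P (pl t) m))
        \<le> expect (act_law K N pl t xs \<bind> next_law K N P xs)
            (\<lambda>xs'. jL1 K (emp K N xs') (PMF P (pl t) (emp K N xs)) + jL1 K (PMF P (pl t) (emp K N xs)) (PMF P (pl t) m))"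
      by (intro integral_mono jL1_triangle) simp_all
    also have "\<dots> = expect (act_law K N pl t xs \<bind> next_law K N P xs)
            (\<lambda>xs'. jL1 K (emp K N xs') (PMF P (pl t) (emp K N xs))) + jL1 K (PMF P (pl t) (emp K N xs)) (PMF P (pl t) m)"
      by simp
    also have "\<dots> \<le> C + S * jL1 K (emp K N xs) m"
      unfolding C_def S_def by (intro add_mono expect_one_step_error PMF_lipschitz jdist_emp m)
    finally show ?thesis .
  qed
  have "mf_error x0 (Suc t) = expect (state_law K N P pl x0 t)
      (\<lambda>xs. expect (act_law K N pl t xs \<bind> next_law K N P xs) (\<lambda>xs'. jL1 K (emp K N xs') (PMF P (pl t) m)))"
    unfolding mf_error_def m_def by (simp add: expect_bind)
  also have "\<dots> \<le> expect (state_law K N P pl x0 t) (\<lambda>xs. C + S * jL1 K (emp K N xs) m)"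
    by (intro integral_mono step) simp_all
  also have "\<dots> = C + S * mf_error x0 t"
    by (simp add: mf_error_def m_def)
  finally show ?thesis
    unfolding C_def S_def .
qed

lemma mf_error_le:
  assumes C: "(2 * sqrt (real CARD('x)) + LP * sqrt (real CARD('u))) * sampling_error K N \<le> C"
    and S: "1 + LQ + LP * (2 + LQ) \<le> S"
  shows "mf_error x0 t \<le> C * (\<Sum>s<t. S ^ s)"
proof (induction t)
  case 0
  then show ?case
    by (simp add: mf_error_def jL1_def)
next
  case (Suc t)
  have "0 \<le> 1 + LQ + LP * (2 + LQ)"
    using LP_nonneg LQ_nonneg by simp
  with S have "0 \<le> S"
    by linarith
  have "mf_error x0 (Suc t)
      \<le> (2 * sqrt (real CARD('x)) + LP * sqrt (real CARD('u))) * sampling_error K N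
        + (1 + LQ + LP * (2 + LQ)) * mf_error x0 t"
    by (rule mf_error_Suc_le)
  also have "\<dots> \<le> C + S * (C * (\<Sum>s<t. S ^ s))"
    using C S Suc.IH \<open>0 \<le> S\<close> mf_error_nonneg by (intro add_mono mult_mono) auto
  also have "\<dots> = C * (\<Sum>s<Suc t. S ^ s)"
    by (simp only: sum.lessThan_Suc_shift power_Suc sum_distrib_left[symmetric]) (simp add: algebra_simps)
  finally show ?case .
qed

definition empirical_reward :: "(nat \<times> nat \<Rightarrow> 'x) \<Rightarrow> nat \<Rightarrow> real" where
  "empirical_reward x0 t = expect (sa_law K N P pl x0 t)
     (\<lambda>(xs, us). (\<Sum>i\<in>agents K N. r (fst i) (xs i) (us i) (emp K N xs) (emp K N us)) / real (Npop K N))"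

definition mf_reward :: "('x \<Rightarrow> nat \<Rightarrow> real) \<Rightarrow> nat \<Rightarrow> real" where
  "mf_reward \<mu>0 t = (\<Sum>k\<in>{1..K}. rMF r (pl t) (mf_traj P pl \<mu>0 t) k)"

lemma agent_avg_reward_lipschitz:
  assumes "is_jdist K \<mu>" "is_jdist K \<nu>1" "is_jdist K \<nu>2"
  shows "\<bar>(\<Sum>i\<in>agents K N. r (fst i) (xs i) (us i) \<mu> \<nu>1) / real (Npop K N)
           - (\<Sum>i\<in>agents K N. r (fst i) (xs i) (us i) \<mu> \<nu>2) / real (Npop K N)\<bar>
         \<le> LR * jL1 K \<nu>1 \<nu>2"
proof -
  have "\<bar>(\<Sum>i\<in>agents K N. r (fst i) (xs i) (us i) \<mu> \<nu>1) / real (Npop K N)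
         - (\<Sum>i\<in>agents K N. r (fst i) (xs i) (us i) \<mu> \<nu>2) / real (Npop K N)\<bar>
      \<le> (\<Sum>i\<in>agents K N. \<bar>r (fst i) (xs i) (us i) \<mu> \<nu>1 - r (fst i) (xs i) (us i) \<mu> \<nu>2\<bar>) / real (Npop K N)"
    by (simp add: diff_divide_distrib[symmetric] abs_divide sum_subtractf[symmetric] divide_right_mono sum_abs)
  also have "\<dots> \<le> (\<Sum>i\<in>agents K N. LR * jL1 K \<nu>1 \<nu>2) / real (Npop K N)"
  proof (intro divide_right_mono sum_mono)
    fix i assume "i \<in> agents K N"
    then have "fst i \<in> {1..K}"
      by (auto simp: agents_def)
    from r_lipschitz[OF this assms(1,2,1,3)]
    show "\<bar>r (fst i) (xs i) (us i) \<mu> \<nu>1 - r (fst i) (xs i) (us i) \<mu> \<nu>2\<bar> \<le> LR * jL1 K \<nu>1 \<nu>2"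
      by (simp add: jL1_def)
  qed simp
  also have "\<dots> = LR * jL1 K \<nu>1 \<nu>2"
    using Npop_gt_0 by (simp add: card_agents)
  finally show ?thesis .
qed

lemma expect_act_law_reward_gap:
  fixes xs :: "nat \<times> nat \<Rightarrow> 'x"
  defines "\<mu> \<equiv> emp K N xs"
  shows "\<bar>expect (act_law K N pl t xs)
            (\<lambda>us. (\<Sum>i\<in>agents K N. r (fst i) (xs i) (us i) \<mu> (emp K N us)) / real (Npop K N))
          - (\<Sum>k\<in>{1..K}. rMF r (pl t) \<mu> k)\<bar>
    \<le> LR * (sqrt (real CARD('u)) * sampling_error K N)"
proof -
  define \<nu> where "\<nu> = nuMF (pl t) \<mu>"
  let ?R = "\<lambda>\<nu>' us. (\<Sum>i\<in>agents K N. r (fst i) (xs i) (us i) \<mu> \<nu>') / real (Npop K N)"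
  have component: "expect (act_law K N pl t xs) (\<lambda>us. r (fst i) (xs i) (us i) \<mu> \<nu>)
      = expect (pl t (fst i) (xs i) \<mu>) (\<lambda>u. r (fst i) (xs i) u \<mu> \<nu>)" if "i \<in> agents K N" for i
    using expect_Pi_pmf_component[OF finite_agents that, of undefined _ "\<lambda>u. r (fst i) (xs i) u \<mu> \<nu>"]
    by (simp add: act_law_def \<mu>_def case_prod_unfold)
  have mean: "(\<Sum>k\<in>{1..K}. rMF r (pl t) \<mu> k) = expect (act_law K N pl t xs) (?R \<nu>)"
    unfolding \<mu>_def \<nu>_def rMF_sum_emp by (simp add: component[unfolded \<mu>_def \<nu>_def] cong: sum.cong)
  have pointwise: "\<bar>?R (emp K N us) us - ?R \<nu> us\<bar> \<le> LR * jL1 K (emp K N us) \<nu>" for us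
    unfolding \<mu>_def \<nu>_def by (intro agent_avg_reward_lipschitz jdist_emp nuMF_jdist)
  have "\<bar>expect (act_law K N pl t xs) (\<lambda>us. ?R (emp K N us) us) - expect (act_law K N pl t xs) (?R \<nu>)\<bar>
      = \<bar>expect (act_law K N pl t xs) (\<lambda>us. ?R (emp K N us) us - ?R \<nu> us)\<bar>"
    by simp
  also have "\<dots> \<le> expect (act_law K N pl t xs) (\<lambda>us. LR * jL1 K (emp K N us) \<nu>)"
    by (intro order_trans[OF integral_abs_bound] integral_mono pointwise) simp_all
  also have "\<dots> \<le> LR * (sqrt (real CARD('u)) * sampling_error K N)"
    unfolding \<nu>_def \<mu>_def integral_mult_right_zero
    by (intro mult_left_mono expect_act_law_jL1_le LR_nonneg)
  finally show ?thesis
    by (simp only: mean)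
qed

lemma reward_gap_le:
  "\<bar>empirical_reward x0 t - mf_reward (emp K N x0) t\<bar>
     \<le> LR * (sqrt (real CARD('u)) * sampling_error K N) + (MR * (1 + LQ) + LR * (2 + LQ)) * mf_error x0 t"
proof -
  define c1 where "c1 = LR * (sqrt (real CARD('u)) * sampling_error K N)"
  define c2 where "c2 = MR * (1 + LQ) + LR * (2 + LQ)"
  define m where "m = mf_traj P pl (emp K N x0) t"
  define R where "R xs us = (\<Sum>i\<in>agents K N. r (fst i) (xs i) (us i) (emp K N xs) (emp K N us)) / real (Npop K N)"
    for xs us
  define B where "B \<mu> = (\<Sum>k\<in>{1..K}. rMF r (pl t) \<mu> k)" for \<mu>
  have m: "is_jdist K m"
    unfolding m_def by (intro mf_traj_jdist jdist_emp)
  have step: "\<bar>expect (act_law K N pl t xs) (R xs) - B m\<bar> \<le> c1 + c2 * jL1 K (emp K N xs) m" for xs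
  proof -
    have "\<bar>expect (act_law K N pl t xs) (R xs) - B m\<bar>
        \<le> \<bar>expect (act_law K N pl t xs) (R xs) - B (emp K N xs)\<bar> + \<bar>B (emp K N xs) - B m\<bar>"
      by linarith
    also have "\<dots> \<le> c1 + c2 * jL1 K (emp K N xs) m"
      unfolding R_def B_def c1_def c2_def
      by (intro add_mono expect_act_law_reward_gap rMF_sum_lipschitz jdist_emp m)
    finally show ?thesis .
  qed
  have "empirical_reward x0 t = expect (state_law K N P pl x0 t) (\<lambda>xs. expect (act_law K N pl t xs) (R xs))"
    unfolding empirical_reward_def sa_law_def R_def by (simp add: expect_bind)
  then have "\<bar>empirical_reward x0 t - B m\<bar>
      = \<bar>expect (state_law K N P pl x0 t) (\<lambda>xs. expect (act_law K N pl t xs) (R xs) - B m)\<bar>"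
    by simp
  also have "\<dots> \<le> expect (state_law K N P pl x0 t) (\<lambda>xs. c1 + c2 * jL1 K (emp K N xs) m)"
    by (intro order_trans[OF integral_abs_bound] integral_mono step) simp_all
  also have "\<dots> = c1 + c2 * mf_error x0 t"
    by (simp add: mf_error_def m_def)
  finally show ?thesis
    by (simp add: mf_reward_def B_def m_def c1_def c2_def)
qed

lemma empirical_reward_sums:
  assumes "0 \<le> \<gamma>" "\<gamma> < 1"
  shows "(\<lambda>t. \<gamma> ^ t * empirical_reward x0 t) sums vN K N r P pl \<gamma> x0"
proof -
  define E where "E i t = expect (sa_law K N P pl x0 t)
      (\<lambda>(xs, us). r (fst i) (xs i) (us i) (emp K N xs) (emp K N us))" for i t
  have "\<bar>E i t\<bar> \<le> MR" if "i \<in> agents K N" for i t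
  proof -
    from that have "fst i \<in> {1..K}"
      by (auto simp: agents_def)
    then show ?thesis
      unfolding E_def by (intro abs_expect_le) (auto intro!: r_bounded jdist_emp)
  qed
  then have "(\<lambda>t. \<gamma> ^ t * E i t) sums (\<Sum>t. \<gamma> ^ t * E i t)" if "i \<in> agents K N" for i
    using assms that by (intro summable_sums summable_discounted)
  then have "(\<lambda>t. (\<Sum>i\<in>agents K N. \<gamma> ^ t * E i t) / real (Npop K N))
      sums ((\<Sum>i\<in>agents K N. \<Sum>t. \<gamma> ^ t * E i t) / real (Npop K N))"
    by (intro sums_divide sums_sum)
  moreover have "\<gamma> ^ t * empirical_reward x0 t = (\<Sum>i\<in>agents K N. \<gamma> ^ t * E i t) / real (Npop K N)" for t
    by (simp add: empirical_reward_def E_def case_prod_unfold sum_distrib_left[symmetric])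
  ultimately show ?thesis
    by (simp add: vN_def E_def)
qed

lemma mf_reward_sums:
  assumes "0 \<le> \<gamma>" "\<gamma> < 1" "is_jdist K \<mu>0"
  shows "(\<lambda>t. \<gamma> ^ t * mf_reward \<mu>0 t) sums vMF K r P pl \<gamma> \<mu>0"
proof -
  have "(\<lambda>t. \<gamma> ^ t * rMF r (pl t) (mf_traj P pl \<mu>0 t) k) sums (\<Sum>t. \<gamma> ^ t * rMF r (pl t) (mf_traj P pl \<mu>0 t) k)"
    if "k \<in> {1..K}" for k
    using summable_discounted[OF assms(1,2) rMF_bounded[OF mf_traj_jdist[OF assms(3)] that]]
    by (rule summable_sums)
  then have "(\<lambda>t. \<Sum>k\<in>{1..K}. \<gamma> ^ t * rMF r (pl t) (mf_traj P pl \<mu>0 t) k) sums vMF K r P pl \<gamma> \<mu>0"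
    unfolding vMF_def by (rule sums_sum)
  then show ?thesis
    by (simp add: mf_reward_def sum_distrib_left)
qed

lemma value_gap_le:
  assumes \<gamma>: "0 \<le> \<gamma>" "\<gamma> < 1" "\<gamma> * S < 1"
    and S: "1 + LQ + LP * (2 + LQ) \<le> S" "1 < S"
    and C: "(2 * sqrt (real CARD('x)) + LP * sqrt (real CARD('u))) * sampling_error K N \<le> C"
    and c: "LR * (sqrt (real CARD('u)) * sampling_error K N) \<le> c"
    and d: "MR * (1 + LQ) + LR * (2 + LQ) \<le> d"
  shows "\<bar>vN K N r P pl \<gamma> x0 - vMF K r P pl \<gamma> (emp K N x0)\<bar>
           \<le> c / (1 - \<gamma>) + d * C / (S - 1) * (1 / (1 - \<gamma> * S) - 1 / (1 - \<gamma>))"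
proof -
  have "0 \<le> MR * (1 + LQ) + LR * (2 + LQ)"
    using MR_nonneg LR_nonneg LQ_nonneg by simp
  with d have "0 \<le> d"
    by linarith
  have gap: "\<bar>empirical_reward x0 t - mf_reward (emp K N x0) t\<bar> \<le> c + d * C * (\<Sum>s<t. S ^ s)" for t
  proof -
    have "(MR * (1 + LQ) + LR * (2 + LQ)) * mf_error x0 t \<le> d * (C * (\<Sum>s<t. S ^ s))"
      using d \<open>0 \<le> d\<close> mf_error_le[OF C S(1)] mf_error_nonneg by (intro mult_mono) auto
    with reward_gap_le[of x0 t] c show ?thesis
      by (simp add: mult.assoc)
  qed
  from discounted_gap_le[OF empirical_reward_sums[OF \<gamma>(1,2)] mf_reward_sums[OF \<gamma>(1,2) jdist_emp] gap \<gamma>(1,3) S(2)]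
  show ?thesis
    by (simp add: mult.assoc)
qed

end

theorem theorem6:
  fixes K :: nat and N :: "nat \<Rightarrow> nat"
    and r :: "nat \<Rightarrow> 'x::finite \<Rightarrow> 'u::finite \<Rightarrow> ('x \<Rightarrow> nat \<Rightarrow> real) \<Rightarrow> ('u \<Rightarrow> nat \<Rightarrow> real) \<Rightarrow> real"
    and P :: "nat \<Rightarrow> 'x \<Rightarrow> 'u \<Rightarrow> ('x \<Rightarrow> nat \<Rightarrow> real) \<Rightarrow> ('u \<Rightarrow> nat \<Rightarrow> real) \<Rightarrow> 'x pmf"
    and pl :: "nat \<Rightarrow> nat \<Rightarrow> 'x \<Rightarrow> ('x \<Rightarrow> nat \<Rightarrow> real) \<Rightarrow> 'u pmf"
    and x0 :: "nat \<times> nat \<Rightarrow> 'x"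
    and MR LR LP LQ \<gamma> :: real
  assumes K: "K \<ge> 1"
    and N: "\<forall>k\<in>{1..K}. N k \<ge> 1"
    and pos_consts: "MR > 0" "LR > 0" "LP > 0" "LQ > 0"
    and gamma: "0 \<le> \<gamma>" "\<gamma> < 1"
    and r_bound: "\<forall>k\<in>{1..K}. \<forall>x u mu nu. is_jdist K mu \<longrightarrow> is_jdist K nu \<longrightarrow>
                    \<bar>r k x u mu nu\<bar> \<le> MR"
    and r_lip: "\<forall>k\<in>{1..K}. \<forall>x u mu1 nu1 mu2 nu2.
                  is_jdist K mu1 \<longrightarrow> is_jdist K nu1 \<longrightarrow> is_jdist K mu2 \<longrightarrow> is_jdist K nu2 \<longrightarrow>
                  \<bar>r k x u mu1 nu1 - r k x u mu2 nu2\<bar> \<le> LR * (jL1 K mu1 mu2 + jL1 K nu1 nu2)"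
    and P_lip: "\<forall>k\<in>{1..K}. \<forall>x u mu1 nu1 mu2 nu2.
                  is_jdist K mu1 \<longrightarrow> is_jdist K nu1 \<longrightarrow> is_jdist K mu2 \<longrightarrow> is_jdist K nu2 \<longrightarrow>
                  pL1 (P k x u mu1 nu1) (P k x u mu2 nu2) \<le> LP * (jL1 K mu1 mu2 + jL1 K nu1 nu2)"
    and SP_small: "\<gamma> * ((1 + real K * LQ) + real K * LP * (2 + real K * LQ)) < 1"
    and pol: "policy_class K LQ pl"
  shows
    "let CR = MR + LR; CP = 2 + real K * LP;
         SR = MR * (1 + LQ) + LR * (2 + real K * LQ);
         SP = (1 + real K * LQ) + real K * LP * (2 + real K * LQ);
         sq = sqrt (real (CARD('x)) * real (CARD('u)));
         sN = (\<Sum>k\<in>{1..K}. 1 / sqrt (real (N k)))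
     in \<bar>vN K N r P pl \<gamma> x0 - vMF K r P pl \<gamma> (emp K N x0)\<bar>
        \<le> CR / (1 - \<gamma>) * sq * sN
           + CP * (SR / (SP - 1)) * sq * sN * (1 / (1 - \<gamma> * SP) - 1 / (1 - \<gamma>))"
proof -
  interpret mean_field_system K N r P pl MR LR LP LQ
    using Npop_pos[OF K N] r_bound r_lip P_lip pol pos_consts
    by unfold_locales (auto simp: policy_class_def)
  define CR CP SR SP sq where "CR = MR + LR" and "CP = 2 + real K * LP"
    and "SR = MR * (1 + LQ) + LR * (2 + real K * LQ)"
    and "SP = (1 + real K * LQ) + real K * LP * (2 + real K * LQ)"
    and "sq = sqrt (real CARD('x) * real CARD('u))"
  have nonneg: "0 \<le> MR" "0 \<le> LR" "0 \<le> LP" "0 \<le> LQ" "0 \<le> sq" "0 \<le> sampling_error K N"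
    using pos_consts by (simp_all add: sq_def sum_nonneg)
  have K_mono: "LQ \<le> real K * LQ" "LP \<le> real K * LP"
    using K nonneg by (simp_all add: mult_le_cancel_right1)
  have sq: "sqrt (real CARD('x)) \<le> sq" "sqrt (real CARD('u)) \<le> sq"
    unfolding sq_def by (simp_all add: Suc_le_eq mult_le_cancel_left1 mult_le_cancel_right1)
  have "\<bar>vN K N r P pl \<gamma> x0 - vMF K r P pl \<gamma> (emp K N x0)\<bar> \<le> CR * sq * sampling_error K N / (1 - \<gamma>)
      + SR * (CP * sq * sampling_error K N) / (SP - 1) * (1 / (1 - \<gamma> * SP) - 1 / (1 - \<gamma>))"
  proof (rule value_gap_le)
    show S: "1 + LQ + LP * (2 + LQ) \<le> SP"
      unfolding SP_def using K_mono nonneg by (intro add_mono mult_mono) auto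
    have "0 < LP * (2 + LQ)"
      using pos_consts by simp
    with S pos_consts show "1 < SP"
      by linarith
    have "2 * sqrt (real CARD('x)) + LP * sqrt (real CARD('u)) \<le> CP * sq"
      unfolding CP_def distrib_right using sq nonneg by (intro add_mono mult_mono K_mono) auto
    then show "(2 * sqrt (real CARD('x)) + LP * sqrt (real CARD('u))) * sampling_error K N
        \<le> CP * sq * sampling_error K N"
      using nonneg by (intro mult_right_mono) auto
    show "LR * (sqrt (real CARD('u)) * sampling_error K N) \<le> CR * sq * sampling_error K N"
      unfolding CR_def using sq nonneg by (simp add: mult.assoc mult_mono)
    show "MR * (1 + LQ) + LR * (2 + LQ) \<le> SR"
      unfolding SR_def using K_mono nonneg by (simp add: mult_left_mono)
  qed (use gamma SP_small SP_def in auto)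
  then show ?thesis
    by (simp add: Let_def CR_def CP_def SR_def SP_def sq_def divide_inverse mult_ac)
qed

end
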